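(* Every oriented twisted link can be represented by a twisted braid whose closure is equivalent (isotopic) to the original link. That is, for every oriented twisted link diagram $D$ there exist $n\ge 1$ and a twisted braid diagram $\beta$ on $n$ strands such that the closure $\widehat{\beta}$ is equivalent to $D$ under planar isotopy and extended Reidemeister moves.
   Context: A twisted link diagram is a generic immersion of finitely many (oriented) circles in the plane whose double points are either classical crossings (with over/under information) or virtual crossings (drawn encircled, with no over/under information), and which may in addition carry finitely many bars, i.e. short segments drawn transversally across the curve at points that are not crossings. Two twisted link diagrams are equivalent (isotopic), i.e. represent the same twisted link, if they are related by planar isotopy and a finite sequence of extended Reidemeister moves: the classical Reidemeister moves R1, R2, R3; the virtual moves V1, V2, V3 (the analogues of R1, R2, R3 in which all crossings are virtual) and V4 (an arc containing only virtual crossings passes across a classical crossing); and the twisted moves T1 (a bar slides along an arc through a virtual crossing), T2 (two adjacent bars on the same arc cancel) and T3 (a classical crossing with one bar on each of its four incident arcs, near the crossing, is replaced by the configuration in which the two strands cross virtually, then classically, then virtually again, the strand that was over in the original crossing now being under; in braid notation below, $b_ib_{i+1}\sigma_ib_{i+1}b_i$ is replaced by $v_i\sigma_iv_i$). A twisted braid on $n$ strands is a braid diagram on $n$ strands, monotone (say, downward-oriented) between $n$ top points and $n$ bottom points, whose crossings may be classical or virtual and whose strands may carry bars. The closure of a twisted braid is the twisted link diagram obtained by joining each top endpoint to the corresponding bottom endpoint by simple arcs in the plane, introducing no new crossings or bars. *)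

theory Defs
  imports Main
begin

text \<open>
Combinatorial encoding of oriented twisted link diagrams in Morse (height-function)
position.  A diagram is read from top to bottom as a word of elementary pieces, each
acting on a horizontal row of points.  A row state is a list of booleans recording
the orientation of the strand through each point (True = pointing downward).

  Cap d i : a local maximum creating two new points at positions i, i+1
            (left one oriented d, right one oriented not d);
  Cup i   : a local minimum joining points i and i+1;
  X t i   : a classical crossing of the strands at positions i, i+1; if t then the
            strand entering from the top-left (position i) is the over strand;
  V i     : a virtual crossing of the strands at positions i, i+1;
  Bar i   : a bar on the strand at position i.
\<close>

datatype gen = Cap bool nat | Cup nat | X bool nat | V nat | Bar nat

fun step :: "bool list \<Rightarrow> gen \<Rightarrow> bool list option" where
  "step w (Cap d i) = (if i \<le> length w then Some (take i w @ [d, \<not> d] @ drop i w) else None)"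
| "step w (Cup i) = (if Suc i < length w \<and> w ! i \<noteq> w ! Suc i
                      then Some (take i w @ drop (Suc (Suc i)) w) else None)"
| "step w (X t i) = (if Suc i < length w
                      then Some (take i w @ [w ! Suc i, w ! i] @ drop (Suc (Suc i)) w) else None)"
| "step w (V i) = (if Suc i < length w
                      then Some (take i w @ [w ! Suc i, w ! i] @ drop (Suc (Suc i)) w) else None)"
| "step w (Bar i) = (if i < length w then Some w else None)"

fun run :: "bool list \<Rightarrow> gen list \<Rightarrow> bool list option" where
  "run w [] = Some w"
| "run w (g # gs) = (case step w g of None \<Rightarrow> None | Some w' \<Rightarrow> run w' gs)"

definition twisted_link_diagram :: "gen list \<Rightarrow> bool" where
  "twisted_link_diagram D \<longleftrightarrow> run [] D = Some []"

fun pos :: "gen \<Rightarrow> nat" where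
  "pos (Cap d i) = i" | "pos (Cup i) = i" | "pos (X t i) = i" | "pos (V i) = i" | "pos (Bar i) = i"

fun setpos :: "gen \<Rightarrow> nat \<Rightarrow> gen" where
  "setpos (Cap d i) j = Cap d j" | "setpos (Cup i) j = Cup j" | "setpos (X t i) j = X t j"
| "setpos (V i) j = V j" | "setpos (Bar i) j = Bar j"

fun top_ar :: "gen \<Rightarrow> nat" where
  "top_ar (Cap d i) = 0" | "top_ar (Cup i) = 2" | "top_ar (X t i) = 2" | "top_ar (V i) = 2"
| "top_ar (Bar i) = 1"

fun bot_ar :: "gen \<Rightarrow> nat" where
  "bot_ar (Cap d i) = 2" | "bot_ar (Cup i) = 0" | "bot_ar (X t i) = 2" | "bot_ar (V i) = 2"
| "bot_ar (Bar i) = 1"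

text \<open>Local moves: planar isotopy relations for Morse diagrams (interchange of distant
pieces, zigzag cancellation, sliding crossings and bars around extrema) and the extended
Reidemeister moves R1--R3, V1--V4, T1--T3.\<close>
inductive local_move :: "gen list \<Rightarrow> gen list \<Rightarrow> bool" where
  interchange: "pos g + top_ar g \<le> pos h \<Longrightarrow>
     local_move [g, setpos h (pos h + bot_ar g - top_ar g)] [h, g]"
| zig1: "local_move [Cap d (Suc i), Cup i] []"
| zig2: "local_move [Cap d i, Cup (Suc i)] []"
| pfX_cap: "local_move [Cap d i, X t (Suc i)] [Cap d (Suc i), X (\<not> t) i]"
| pfX_cup: "local_move [X t i, Cup (Suc i)] [X (\<not> t) (Suc i), Cup i]"
| pfV_cap: "local_move [Cap d i, V (Suc i)] [Cap d (Suc i), V i]"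
| pfV_cup: "local_move [V i, Cup (Suc i)] [V (Suc i), Cup i]"
| bar_cap: "local_move [Cap d i, Bar i] [Cap d i, Bar (Suc i)]"
| bar_cup: "local_move [Bar i, Cup i] [Bar (Suc i), Cup i]"
| R1a: "local_move [Cap d (Suc i), X t i, Cup i] []"
| R1b: "local_move [Cap d i, X t (Suc i), Cup (Suc i)] []"
| R1c: "local_move [Cap d i, X t i, Cup (Suc i)] []"
| R1d: "local_move [Cap d (Suc i), X t (Suc i), Cup i] []"
| R2: "local_move [X t i, X (\<not> t) i] []"
| R3: "\<not> (ab \<and> bc \<and> \<not> ac) \<Longrightarrow> \<not> (\<not> ab \<and> \<not> bc \<and> ac) \<Longrightarrow>
     local_move [X ab i, X ac (Suc i), X bc i] [X bc (Suc i), X ac i, X ab (Suc i)]"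
| V1a: "local_move [Cap d (Suc i), V i, Cup i] []"
| V1b: "local_move [Cap d i, V (Suc i), Cup (Suc i)] []"
| V1c: "local_move [Cap d i, V i, Cup (Suc i)] []"
| V1d: "local_move [Cap d (Suc i), V (Suc i), Cup i] []"
| V2: "local_move [V i, V i] []"
| V3: "local_move [V i, V (Suc i), V i] [V (Suc i), V i, V (Suc i)]"
| V4a: "local_move [V i, V (Suc i), X t i] [X t (Suc i), V i, V (Suc i)]"
| V4b: "local_move [V (Suc i), V i, X t (Suc i)] [X t i, V (Suc i), V i]"
| T1a: "local_move [Bar i, V i] [V i, Bar (Suc i)]"
| T1b: "local_move [Bar (Suc i), V i] [V i, Bar i]"
| T2: "local_move [Bar i, Bar i] []"
| T3: "local_move [Bar i, Bar (Suc i), X t i, Bar i, Bar (Suc i)] [V i, X t i, V i]"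

definition move_step :: "gen list \<Rightarrow> gen list \<Rightarrow> bool" where
  "move_step D E \<longleftrightarrow> twisted_link_diagram D \<and> twisted_link_diagram E \<and>
     (\<exists>u v l r. local_move l r \<and> D = u @ l @ v \<and> E = u @ r @ v)"

definition twisted_equiv :: "gen list \<Rightarrow> gen list \<Rightarrow> bool" where
  "twisted_equiv = (\<lambda>D E. move_step D E \<or> move_step E D)\<^sup>*\<^sup>*"

text \<open>Twisted braids on n strands (all strands oriented downward).\<close>
datatype bgen = BX bool nat | BV nat | BB nat

fun bgen_ok :: "nat \<Rightarrow> bgen \<Rightarrow> bool" where
  "bgen_ok n (BX t i) = (Suc i < n)" | "bgen_ok n (BV i) = (Suc i < n)" | "bgen_ok n (BB i) = (i < n)"

definition twisted_braid :: "nat \<Rightarrow> bgen list \<Rightarrow> bool" where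
  "twisted_braid n \<beta> \<longleftrightarrow> (\<forall>g \<in> set \<beta>. bgen_ok n g)"

fun bgen_to_gen :: "bgen \<Rightarrow> gen" where
  "bgen_to_gen (BX t i) = X t i" | "bgen_to_gen (BV i) = V i" | "bgen_to_gen (BB i) = Bar i"

text \<open>Closure: nested caps to the right, then the braid, then nested cups; top endpoint k
is joined to bottom endpoint k by an arc running to the right of the braid.\<close>
definition braid_closure :: "nat \<Rightarrow> bgen list \<Rightarrow> gen list" where
  "braid_closure n \<beta> = map (\<lambda>k. Cap True k) [0..<n] @ map bgen_to_gen \<beta> @ map Cup (rev [0..<n])"

end

theory Submission
  imports Defs
begin

(* The diagram is read from top to bottom as a word of caps, cups, crossings and bars. By
   induction on this word, every prefix is equivalent to a partially closed braid followed by a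
   virtual word: n nested caps, a braid on n downward strands, cups closing the strands k, ..., n-1,
   and then virtual crossings among the 2k open points.

   The heart of the argument is that a virtual word fixing the row of orientations can be absorbed
   into the braid: by the Coxeter presentation of the symmetric group it factors into a word on the
   k downward points, which enters the braid directly, and a word on the k upward points, which
   slides around the closing arcs into the top of the braid. Using this, a crossing or bar on
   downward strands, and a cup, are moved into normal position and absorbed; a new cap becomes a
   new leftmost braid strand whose arc makes a virtual detour around the whole diagram; pieces
   involving upward strands are first rotated by zigzag moves. For a closed diagram k = 0, and
   what remains is the closure of the braid. *)

section \<open>Equivalence of words relative to an input row\<close>

lemma run_append: "run w (a @ b) = (case run w a of None \<Rightarrow> None | Some x \<Rightarrow> run x b)"
  by (induction a arbitrary: w) (auto split: option.splits)

lemma run_append_Some: "run w a = Some x \<Longrightarrow> run w (a @ b) = run x b"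
  by (simp add: run_append)

text \<open>Unlike \<^const>\<open>twisted_equiv\<close>, only the row at the top is fixed and the words need not
  close up; this makes the relation a congruence for concatenation.\<close>

inductive move_at :: "bool list \<Rightarrow> gen list \<Rightarrow> gen list \<Rightarrow> bool" where
  move_atI: "run w a = Some x \<Longrightarrow> local_move l r \<or> local_move r l \<Longrightarrow> run x l = Some y \<Longrightarrow>
    run x r = Some y \<Longrightarrow> move_at w (a @ l @ b) (a @ r @ b)"

definition equiv_at :: "bool list \<Rightarrow> gen list \<Rightarrow> gen list \<Rightarrow> bool" where
  "equiv_at w = (move_at w)\<^sup>*\<^sup>*"

lemma equiv_at_refl [simp]: "equiv_at w u u"
  by (simp add: equiv_at_def)

lemma equiv_at_trans [trans]: "equiv_at w u v \<Longrightarrow> equiv_at w v z \<Longrightarrow> equiv_at w u z"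
  unfolding equiv_at_def by simp

lemma move_at_sym: "move_at w u v \<Longrightarrow> move_at w v u"
  by (induction rule: move_at.induct) (metis move_atI)

lemma equiv_at_sym: "equiv_at w u v \<Longrightarrow> equiv_at w v u"
  unfolding equiv_at_def
  by (induction rule: rtranclp_induct) (auto intro: converse_rtranclp_into_rtranclp move_at_sym)

lemma move_at_run: "move_at w u v \<Longrightarrow> run w u = run w v"
  by (induction rule: move_at.induct) (simp add: run_append)

lemma equiv_at_run: "equiv_at w u v \<Longrightarrow> run w u = run w v"
  unfolding equiv_at_def by (induction rule: rtranclp_induct) (auto dest: move_at_run)

lemma move_at_cong: "move_at x u v \<Longrightarrow> run w a = Some x \<Longrightarrow> move_at w (a @ u @ b) (a @ v @ b)"
proof (induction rule: move_at.induct)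
  case (move_atI x' c z l r y d)
  have "run w (a @ c) = Some z"
    using move_atI by (simp add: run_append)
  then have "move_at w ((a @ c) @ l @ (d @ b)) ((a @ c) @ r @ (d @ b))"
    using move_atI by (intro move_at.move_atI) auto
  then show ?case by simp
qed

lemma equiv_at_cong: "equiv_at x u v \<Longrightarrow> run w a = Some x \<Longrightarrow> equiv_at w (a @ u @ b) (a @ v @ b)"
  unfolding equiv_at_def
proof (induction rule: rtranclp_induct)
  case (step y z)
  then show ?case by (meson move_at_cong rtranclp.simps)
qed simp

lemma equiv_at_append_left: "equiv_at x u v \<Longrightarrow> run w a = Some x \<Longrightarrow> equiv_at w (a @ u) (a @ v)"
  using equiv_at_cong[of x u v w a "[]"] by simp

lemma equiv_at_append_right: "equiv_at w u v \<Longrightarrow> equiv_at w (u @ b) (v @ b)"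
  using equiv_at_cong[of w u v w "[]" b] by simp

lemma equiv_at_local_move:
  "local_move l r \<or> local_move r l \<Longrightarrow> run x l = Some y \<Longrightarrow> run x r = Some y \<Longrightarrow> equiv_at x l r"
  unfolding equiv_at_def using move_atI[of x "[]" x l r y "[]"] by auto

lemma twisted_equiv_if_equiv_at:
  assumes "equiv_at [] u v" "run [] u = Some []"
  shows "twisted_equiv u v"
  using assms unfolding equiv_at_def twisted_equiv_def
proof (induction rule: rtranclp_induct)
  case (step y z)
  have y: "run [] y = Some []"
    using step equiv_at_run[of "[]" u y] by (simp add: equiv_at_def)
  from step(2) have "move_step y z \<or> move_step z y"
  proof cases
    case (move_atI a x l r y' b)
    have "run [] z = Some []"
      using move_at_run[OF step(2)] y by simp
    then show ?thesis
      using move_atI y unfolding move_step_def twisted_link_diagram_def by blast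
  qed
  then show ?case
    using step by (simp add: rtranclp.rtrancl_into_rtrancl)
qed simp

fun local_ok :: "gen \<Rightarrow> bool list \<Rightarrow> bool" where
  "local_ok (Cup i) s = (s ! 0 \<noteq> s ! 1)"
| "local_ok _ s = True"

fun local_out :: "gen \<Rightarrow> bool list \<Rightarrow> bool list" where
  "local_out (Cap d i) s = [d, \<not> d]"
| "local_out (Cup i) s = []"
| "local_out (X t i) s = [s ! 1, s ! 0]"
| "local_out (V i) s = [s ! 1, s ! 0]"
| "local_out (Bar i) s = s"

lemma length_local_out: "length s = top_ar g \<Longrightarrow> length (local_out g s) = bot_ar g"
  by (cases g) auto

lemma length_eq_2_iff: "length s = 2 \<longleftrightarrow> (\<exists>a b. s = [a, b])"
  by (cases s; cases "tl s") (auto simp: numeral_2_eq_2)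

lemma step_local:
  assumes "length A = pos g" "length S = top_ar g"
  shows "step (A @ S @ B) g = (if local_ok g S then Some (A @ local_out g S @ B) else None)"
proof (cases g)
  case (Bar i)
  then obtain a where "S = [a]"
    using assms by (cases S) auto
  then show ?thesis using Bar assms by (auto simp: nth_append)
qed (use assms in \<open>auto simp: nth_append length_eq_2_iff\<close>)

lemma step_length: "step x g = Some y \<Longrightarrow> length y + top_ar g = length x + bot_ar g"
  by (cases g) (auto split: if_splits)

lemma step_Some_pos: "step u g = Some u' \<Longrightarrow> pos g + top_ar g \<le> length u"
  by (cases g) (auto split: if_splits)

lemma pos_setpos [simp]: "pos (setpos g j) = j" by (cases g) auto
lemma top_ar_setpos [simp]: "top_ar (setpos g j) = top_ar g" by (cases g) auto
lemma bot_ar_setpos [simp]: "bot_ar (setpos g j) = bot_ar g" by (cases g) auto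
lemma local_ok_setpos [simp]: "local_ok (setpos g j) = local_ok g" by (cases g) (auto intro!: ext)
lemma local_out_setpos [simp]: "local_out (setpos g j) = local_out g" by (cases g) (auto intro!: ext)
lemma setpos_setpos [simp]: "setpos (setpos g j) k = setpos g k" by (cases g) auto
lemma setpos_pos [simp]: "setpos g (pos g) = g" by (cases g) auto

lemma run_interchange:
  assumes "pos g + top_ar g \<le> pos h"
  shows "run x [g, setpos h (pos h + bot_ar g - top_ar g)] = run x [h, g]"
proof (cases "pos h + top_ar h \<le> length x")
  case True
  define A where "A = take (pos g) x"
  define S where "S = take (top_ar g) (drop (pos g) x)"
  define M where "M = take (pos h - pos g - top_ar g) (drop (pos g + top_ar g) x)"
  define T where "T = take (top_ar h) (drop (pos h) x)"
  define C where "C = drop (pos h + top_ar h) x"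
  have x: "x = A @ S @ M @ T @ C"
    unfolding A_def S_def M_def T_def C_def using assms True
    by (metis add.commute append_take_drop_id diff_diff_left drop_drop le_add_diff_inverse le_trans)
  have len: "length A = pos g" "length S = top_ar g" "length M = pos h - pos g - top_ar g"
    "length T = top_ar h" "length (local_out g S) = bot_ar g"
    unfolding A_def S_def M_def T_def using assms True length_local_out by auto
  have "step x h = (if local_ok h T then Some (A @ S @ M @ local_out h T @ C) else None)"
    using step_local[of "A @ S @ M" h T C] x len assms by auto
  moreover have "step x g = (if local_ok g S then Some (A @ local_out g S @ M @ T @ C) else None)"
    using step_local[of A g S] len x by auto
  moreover have "step (A @ local_out g S @ M @ T @ C) (setpos h (pos h + bot_ar g - top_ar g))
     = (if local_ok h T then Some (A @ local_out g S @ M @ local_out h T @ C) else None)"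
    using step_local[of "A @ local_out g S @ M" "setpos h (pos h + bot_ar g - top_ar g)" T C] len assms
    by auto
  ultimately show ?thesis
    using step_local[of A g S] len by auto
next
  case False
  then have "step x h = None"
    by (cases h) auto
  moreover have "step x g = None \<or> (\<exists>y. step x g = Some y \<and> length y + top_ar g = length x + bot_ar g)"
    using step_length by (cases "step x g") auto
  ultimately show ?thesis
    using False assms by (cases h) (auto split: option.splits)
qed

lemma equiv_at_interchange:
  assumes "pos g + top_ar g \<le> pos h" "run x [h, g] \<noteq> None"
  shows "equiv_at x [h, g] [g, setpos h (pos h + bot_ar g - top_ar g)]"
proof -
  obtain y where "run x [h, g] = Some y"
    using assms(2) by blast
  then show ?thesis
    using assms(1) run_interchange[OF assms(1)]
    by (intro equiv_at_local_move) (auto intro: local_move.interchange)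
qed

lemma equiv_at_interchange':
  assumes "pos g + top_ar g \<le> pos h" "run x [g, setpos h (pos h + bot_ar g - top_ar g)] \<noteq> None"
  shows "equiv_at x [g, setpos h (pos h + bot_ar g - top_ar g)] [h, g]"
  using assms equiv_at_interchange equiv_at_sym run_interchange by metis

lemma split_length: "i \<le> length x \<Longrightarrow> \<exists>A B. x = A @ B \<and> length A = i"
  by (rule exI[of _ "take i x"], rule exI[of _ "drop i x"]) simp

lemma split_nth: "i < length x \<Longrightarrow> \<exists>A a B. x = A @ a # B \<and> length A = i"
  by (rule exI[of _ "take i x"], rule exI[of _ "x ! i"], rule exI[of _ "drop (Suc i) x"])
     (simp add: Cons_nth_drop_Suc)

lemma split_nth2: "Suc i < length x \<Longrightarrow> \<exists>A a b B. x = A @ a # b # B \<and> length A = i"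
  by (rule exI[of _ "take i x"], rule exI[of _ "x ! i"], rule exI[of _ "x ! Suc i"],
      rule exI[of _ "drop (Suc (Suc i)) x"]) (simp add: Cons_nth_drop_Suc)

lemma split_nth3: "Suc (Suc i) < length x \<Longrightarrow> \<exists>A a b c B. x = A @ a # b # c # B \<and> length A = i"
  by (rule exI[of _ "take i x"], rule exI[of _ "x ! i"], rule exI[of _ "x ! Suc i"],
      rule exI[of _ "x ! Suc (Suc i)"], rule exI[of _ "drop (Suc (Suc (Suc i))) x"])
     (simp add: Cons_nth_drop_Suc)

definition shift_gen :: "nat \<Rightarrow> gen \<Rightarrow> gen" where
  "shift_gen n g = setpos g (pos g + n)"

lemma shift_gen_simps [simp]:
  "shift_gen n (Cap d i) = Cap d (i + n)" "shift_gen n (Cup i) = Cup (i + n)"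
  "shift_gen n (X t i) = X t (i + n)" "shift_gen n (V i) = V (i + n)" "shift_gen n (Bar i) = Bar (i + n)"
  by (auto simp: shift_gen_def)

lemma pos_shift_gen [simp]: "pos (shift_gen n g) = pos g + n" by (simp add: shift_gen_def)
lemma top_ar_shift_gen [simp]: "top_ar (shift_gen n g) = top_ar g" by (simp add: shift_gen_def)
lemma bot_ar_shift_gen [simp]: "bot_ar (shift_gen n g) = bot_ar g" by (simp add: shift_gen_def)
lemma shift_gen_setpos [simp]: "shift_gen n (setpos g j) = setpos g (j + n)" by (simp add: shift_gen_def)

lemma step_shift_gen: "length A = n \<Longrightarrow> step (A @ w) (shift_gen n g) = map_option ((@) A) (step w g)"
  by (cases g) (auto simp: nth_append)

lemma run_shift_gen: "length A = n \<Longrightarrow> run (A @ w) (map (shift_gen n) u) = map_option ((@) A) (run w u)"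
  by (induction u arbitrary: w) (auto simp: step_shift_gen split: option.splits)

lemma local_move_shift_gen: "local_move l r \<Longrightarrow> local_move (map (shift_gen n) l) (map (shift_gen n) r)"
proof (induction rule: local_move.induct)
  case (interchange g h)
  have e: "pos h + bot_ar g - top_ar g + n
      = pos (shift_gen n h) + bot_ar (shift_gen n g) - top_ar (shift_gen n g)"
    using interchange by simp
  have "local_move [shift_gen n g, setpos (shift_gen n h)
      (pos (shift_gen n h) + bot_ar (shift_gen n g) - top_ar (shift_gen n g))] [shift_gen n h, shift_gen n g]"
    using interchange by (intro local_move.interchange) simp
  then show ?case by (simp only: list.map shift_gen_setpos e) (simp add: shift_gen_def)
next
  case (R3 ab bc ac i)
  then show ?case using local_move.R3[of ab bc ac "i + n"] by simp
qed (auto intro: local_move.intros)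

lemma move_at_shift:
  "move_at w u v \<Longrightarrow> length A = n \<Longrightarrow> move_at (A @ w) (map (shift_gen n) u) (map (shift_gen n) v)"
proof (induction rule: move_at.induct)
  case (move_atI w a x l r y b)
  have "move_at (A @ w) (map (shift_gen n) a @ map (shift_gen n) l @ map (shift_gen n) b)
      (map (shift_gen n) a @ map (shift_gen n) r @ map (shift_gen n) b)"
    using move_atI
    by (intro move_at.move_atI[where x = "A @ x" and y = "A @ y"]) (auto simp: run_shift_gen local_move_shift_gen)
  then show ?case by simp
qed

lemma equiv_at_shift:
  "equiv_at w u v \<Longrightarrow> length A = n \<Longrightarrow> equiv_at (A @ w) (map (shift_gen n) u) (map (shift_gen n) v)"
  unfolding equiv_at_def
proof (induction rule: rtranclp_induct)
  case (step y z)
  then show ?case by (meson move_at_shift rtranclp.simps)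
qed simp

lemma step_extend: "step w g = Some y \<Longrightarrow> step (w @ z) g = Some (y @ z)"
  by (cases g) (auto simp: nth_append split: if_splits)

lemma run_extend: "run w u = Some y \<Longrightarrow> run (w @ z) u = Some (y @ z)"
  by (induction u arbitrary: w) (auto simp: step_extend split: option.splits)

lemma equiv_at_V2: "Suc i < length x \<Longrightarrow> equiv_at x [V i, V i] []"
  by (drule split_nth2) (auto intro!: equiv_at_local_move local_move.V2 simp: nth_append)

lemma equiv_at_V3:
  "Suc (Suc i) < length x \<Longrightarrow> equiv_at x [V i, V (Suc i), V i] [V (Suc i), V i, V (Suc i)]"
  by (drule split_nth3) (auto intro!: equiv_at_local_move local_move.V3 simp: nth_append)

lemma equiv_at_V4a:
  "Suc (Suc i) < length x \<Longrightarrow> equiv_at x [V i, V (Suc i), X t i] [X t (Suc i), V i, V (Suc i)]"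
  by (drule split_nth3) (auto intro!: equiv_at_local_move local_move.V4a simp: nth_append)

lemma equiv_at_V4b:
  "Suc (Suc i) < length x \<Longrightarrow> equiv_at x [V (Suc i), V i, X t (Suc i)] [X t i, V (Suc i), V i]"
  by (drule split_nth3) (auto intro!: equiv_at_local_move local_move.V4b simp: nth_append)

lemma equiv_at_T1a: "Suc i < length x \<Longrightarrow> equiv_at x [Bar i, V i] [V i, Bar (Suc i)]"
  by (drule split_nth2) (auto intro!: equiv_at_local_move local_move.T1a simp: nth_append)

lemma equiv_at_T1b: "Suc i < length x \<Longrightarrow> equiv_at x [Bar (Suc i), V i] [V i, Bar i]"
  by (drule split_nth2) (auto intro!: equiv_at_local_move local_move.T1b simp: nth_append)

lemma equiv_at_pfV_cap: "i < length x \<Longrightarrow> equiv_at x [Cap d i, V (Suc i)] [Cap d (Suc i), V i]"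
  by (drule split_nth) (auto intro!: equiv_at_local_move local_move.pfV_cap simp: nth_append)

lemma equiv_at_pfX_cap: "i < length x \<Longrightarrow> equiv_at x [Cap d i, X t (Suc i)] [Cap d (Suc i), X (\<not> t) i]"
  by (drule split_nth) (auto intro!: equiv_at_local_move local_move.pfX_cap simp: nth_append)

lemma equiv_at_bar_cap: "i \<le> length x \<Longrightarrow> equiv_at x [Cap d i, Bar i] [Cap d i, Bar (Suc i)]"
  by (drule split_length) (auto intro!: equiv_at_local_move local_move.bar_cap simp: nth_append)

lemma equiv_at_pfV_cup:
  "run x [V i, Cup (Suc i)] \<noteq> None \<Longrightarrow> equiv_at x [V i, Cup (Suc i)] [V (Suc i), Cup i]"
  by (cases "Suc (Suc i) < length x")
    (auto dest!: split_nth3 intro!: equiv_at_local_move local_move.pfV_cup simp: nth_append split: if_splits)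

lemma equiv_at_zig1: "i < length x \<Longrightarrow> x ! i \<noteq> d \<Longrightarrow> equiv_at x [Cap d (Suc i), Cup i] []"
  by (drule split_nth) (auto intro!: equiv_at_local_move local_move.zig1 simp: nth_append)

lemma equiv_at_zig2: "i < length x \<Longrightarrow> x ! i = d \<Longrightarrow> equiv_at x [Cap d i, Cup (Suc i)] []"
  by (drule split_nth) (auto intro!: equiv_at_local_move local_move.zig2 simp: nth_append)

lemma equiv_at_V1a: "i < length x \<Longrightarrow> x ! i \<noteq> d \<Longrightarrow> equiv_at x [Cap d (Suc i), V i, Cup i] []"
  by (drule split_nth) (auto intro!: equiv_at_local_move local_move.V1a simp: nth_append)

lemma equiv_at_V1c: "i < length x \<Longrightarrow> x ! i \<noteq> d \<Longrightarrow> equiv_at x [Cap d i, V i, Cup (Suc i)] []"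
  by (drule split_nth) (auto intro!: equiv_at_local_move local_move.V1c simp: nth_append)

lemma cap_flip:
  assumes "i \<le> length x"
  shows "equiv_at x [Cap (\<not> d) i] [Cap d i, V i]"
proof -
  obtain A B where x: "x = A @ B" "length A = i"
    using split_length[OF assms] by blast
  have "equiv_at x [Cap (\<not> d) i] [Cap (\<not> d) i, Cap d i, V i, Cup (Suc i)]"
    using equiv_at_cong[OF equiv_at_sym[OF equiv_at_V1c[of i "A @ [\<not> d, d] @ B" d]], of x "[Cap (\<not> d) i]" "[]"] x
    by (simp add: nth_append)
  also have "equiv_at x \<dots> [Cap d i, Cap (\<not> d) (Suc (Suc i)), V i, Cup (Suc i)]"
    using equiv_at_cong[OF equiv_at_interchange[of "Cap d i" "Cap (\<not> d) i" x], of x "[]" "[V i, Cup (Suc i)]"] x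
    by (simp add: nth_append)
  also have "equiv_at x \<dots> [Cap d i, V i, Cap (\<not> d) (Suc (Suc i)), Cup (Suc i)]"
    using equiv_at_cong[OF equiv_at_interchange[of "V i" "Cap (\<not> d) (Suc (Suc i))" "A @ [d, \<not> d] @ B"],
        of x "[Cap d i]" "[Cup (Suc i)]"] x
    by (simp add: nth_append)
  also have "equiv_at x \<dots> [Cap d i, V i]"
    using equiv_at_cong[OF equiv_at_zig1[of "Suc i" "A @ [\<not> d, d] @ B" "\<not> d"], of x "[Cap d i, V i]" "[]"] x
    by (simp add: nth_append)
  finally show ?thesis .
qed

lemma cup_flip:
  assumes "run x [Cup i] \<noteq> None"
  shows "equiv_at x [Cup i] [V i, Cup i]"
proof -
  have "Suc i < length x"
    using assms by (auto split: if_splits)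
  then obtain A a b B where x: "x = A @ a # b # B" "length A = i"
    using split_nth2 by blast
  have ab: "a \<noteq> b"
    using assms x by (auto simp: nth_append split: if_splits)
  have "equiv_at x [Cup i] [Cap (\<not> a) (Suc i), V i, Cup i, Cup i]"
    using equiv_at_cong[OF equiv_at_sym[OF equiv_at_V1a[of i x "\<not> a"]], of x "[]" "[Cup i]"] x
    by (simp add: nth_append)
  also have "equiv_at x \<dots> [Cap (\<not> a) (Suc i), V i, Cup (Suc (Suc i)), Cup i]"
    using equiv_at_cong[OF equiv_at_interchange'[of "Cup i" "Cup (Suc (Suc i))" "A @ (\<not> a) # a # a # b # B"],
        of x "[Cap (\<not> a) (Suc i), V i]" "[]"] x ab
    by (simp add: nth_append)
  also have "equiv_at x \<dots> [Cap (\<not> a) (Suc i), Cup (Suc (Suc i)), V i, Cup i]"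
    using equiv_at_cong[OF equiv_at_interchange'[of "V i" "Cup (Suc (Suc i))" "A @ a # (\<not> a) # a # b # B"],
        of x "[Cap (\<not> a) (Suc i)]" "[Cup i]"] x ab
    by (simp add: nth_append)
  also have "equiv_at x \<dots> [V i, Cup i]"
    using equiv_at_cong[OF equiv_at_zig2[of "Suc i" x "\<not> a"], of x "[]" "[V i, Cup i]"] x ab
    by (simp add: nth_append)
  finally show ?thesis .
qed

section \<open>Virtual words and the permutations they induce\<close>

definition virtual :: "nat list \<Rightarrow> gen list" where
  "virtual u = map V u"

definition within :: "nat \<Rightarrow> nat list \<Rightarrow> bool" where
  "within N u \<longleftrightarrow> (\<forall>i\<in>set u. Suc i < N)"

lemma virtual_simps [simp]:
  "virtual [] = []" "virtual (i # u) = V i # virtual u" "virtual (u @ v) = virtual u @ virtual v"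
  by (auto simp: virtual_def)

lemma within_simps [simp]:
  "within N []" "within N (i # u) \<longleftrightarrow> Suc i < N \<and> within N u"
  "within N (u @ v) \<longleftrightarrow> within N u \<and> within N v" "within N (rev u) \<longleftrightarrow> within N u"
  by (auto simp: within_def)

lemma within_mono: "within N u \<Longrightarrow> N \<le> M \<Longrightarrow> within M u"
  by (auto simp: within_def)

lemma within_upt: "within N [a..<b] \<longleftrightarrow> (a < b \<longrightarrow> b < N)"
  by (auto simp: within_def dest: bspec[of _ _ "b - 1"])

definition swap_at :: "nat \<Rightarrow> 'a list \<Rightarrow> 'a list" where
  "swap_at i w = take i w @ [w ! Suc i, w ! i] @ drop (Suc (Suc i)) w"

fun apply_swaps :: "nat list \<Rightarrow> 'a list \<Rightarrow> 'a list" where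
  "apply_swaps [] w = w"
| "apply_swaps (i # u) w = apply_swaps u (swap_at i w)"

lemma length_swap_at [simp]: "Suc i < length w \<Longrightarrow> length (swap_at i w) = length w"
  by (simp add: swap_at_def)

lemma length_apply_swaps [simp]: "within (length w) u \<Longrightarrow> length (apply_swaps u w) = length w"
  by (induction u arbitrary: w) auto

lemma apply_swaps_append: "apply_swaps (u @ v) w = apply_swaps v (apply_swaps u w)"
  by (induction u arbitrary: w) auto

lemma step_V: "Suc i < length w \<Longrightarrow> step w (V i) = Some (swap_at i w)"
  by (simp add: swap_at_def)

lemma run_virtual: "within (length w) u \<Longrightarrow> run w (virtual u) = Some (apply_swaps u w)"
  by (induction u arbitrary: w) (auto simp: step_V simp del: step.simps)

lemma equiv_at_virtual_cong:
  "equiv_at (apply_swaps a x) u v \<Longrightarrow> within (length x) a \<Longrightarrow>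
   equiv_at x (virtual a @ u @ b) (virtual a @ v @ b)"
  by (simp add: equiv_at_cong run_virtual)

lemma swap_at_append_Cons: "length A = i \<Longrightarrow> swap_at i (A @ a # b # B) = A @ b # a # B"
  by (simp add: swap_at_def nth_append)

lemma swap_at_same: "Suc i < length w \<Longrightarrow> w ! i = w ! Suc i \<Longrightarrow> swap_at i w = w"
  by (auto dest!: split_nth2 simp: swap_at_append_Cons nth_append)

lemma nth_swap_at:
  assumes "Suc p < length x" "q < length x"
  shows "swap_at p x ! q = (if q = p then x ! Suc p else if q = Suc p then x ! p else x ! q)"
proof -
  obtain A c d B where x: "x = A @ c # d # B" "length A = p"
    using split_nth2 assms(1) by blast
  show ?thesis
    using assms x by (auto simp: swap_at_append_Cons nth_append nth_Cons' numeral_2_eq_2)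
qed

lemma swap_at_map: "Suc i < length w \<Longrightarrow> swap_at i (map f w) = map f (swap_at i w)"
  by (simp add: swap_at_def take_map drop_map)

lemma apply_swaps_map: "within (length w) u \<Longrightarrow> apply_swaps u (map f w) = map f (apply_swaps u w)"
  by (induction u arbitrary: w) (auto simp: swap_at_map)

lemma swap_at_prefix: "Suc i < length A \<Longrightarrow> swap_at i (A @ B) = swap_at i A @ B"
  by (simp add: swap_at_def nth_append)

lemma apply_swaps_prefix: "within (length A) u \<Longrightarrow> apply_swaps u (A @ B) = apply_swaps u A @ B"
  by (induction u arbitrary: A) (auto simp: swap_at_prefix)

lemma swap_at_shift: "length A = n \<Longrightarrow> Suc i < length B \<Longrightarrow> swap_at (n + i) (A @ B) = A @ swap_at i B"
  by (simp add: swap_at_def nth_append)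

lemma apply_swaps_shift:
  "length A = n \<Longrightarrow> within (length B) u \<Longrightarrow> apply_swaps (map ((+) n) u) (A @ B) = A @ apply_swaps u B"
  by (induction u arbitrary: B) (auto simp: swap_at_shift)

lemma set_apply_swaps:
  "within (length w) u \<Longrightarrow> set (apply_swaps u w) = set w \<and> (distinct (apply_swaps u w) \<longleftrightarrow> distinct w)"
  by (induction u arbitrary: w) (auto dest!: split_nth2 simp: swap_at_append_Cons)

lemma apply_swaps_upt_Cons: "apply_swaps [length A..<length A + length B] (A @ y # B) = A @ B @ [y]"
proof (induction B arbitrary: A)
  case (Cons b B)
  have "[length A..<length A + length (b # B)]
      = length A # [length (A @ [b])..<length (A @ [b]) + length B]"
    by (simp add: upt_conv_Cons del: upt_Suc)
  then show ?case
    using Cons[of "A @ [b]"] by (simp add: swap_at_append_Cons)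
qed simp

lemma apply_swaps_upt_mid:
  "apply_swaps [length A..<length A + length S] (A @ s # S @ C) = A @ S @ s # C"
  using apply_swaps_upt_Cons[of A S s] apply_swaps_prefix[of "A @ s # S" _ C]
  by (simp add: within_upt)

subsection \<open>The Coxeter presentation of the symmetric group\<close>

inductive coxeter_step :: "nat \<Rightarrow> nat list \<Rightarrow> nat list \<Rightarrow> bool" for N where
  delete: "Suc i < N \<Longrightarrow> coxeter_step N (a @ i # i # b) (a @ b)"
| insert: "Suc i < N \<Longrightarrow> coxeter_step N (a @ b) (a @ i # i # b)"
| braid: "Suc (Suc i) < N \<Longrightarrow> coxeter_step N (a @ i # Suc i # i # b) (a @ Suc i # i # Suc i # b)"
| braid_rev: "Suc (Suc i) < N \<Longrightarrow> coxeter_step N (a @ Suc i # i # Suc i # b) (a @ i # Suc i # i # b)"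
| commute: "Suc i < N \<Longrightarrow> Suc j < N \<Longrightarrow> Suc (Suc i) \<le> j \<or> Suc (Suc j) \<le> i \<Longrightarrow>
    coxeter_step N (a @ i # j # b) (a @ j # i # b)"

definition coxeter_equiv :: "nat \<Rightarrow> nat list \<Rightarrow> nat list \<Rightarrow> bool" where
  "coxeter_equiv N = (coxeter_step N)\<^sup>*\<^sup>*"

lemma coxeter_equiv_refl [simp]: "coxeter_equiv N u u"
  by (simp add: coxeter_equiv_def)

lemma coxeter_equiv_trans [trans]: "coxeter_equiv N u v \<Longrightarrow> coxeter_equiv N v w \<Longrightarrow> coxeter_equiv N u w"
  by (simp add: coxeter_equiv_def)

lemma coxeter_step_sym: "coxeter_step N u v \<Longrightarrow> coxeter_step N v u"
proof (induction rule: coxeter_step.induct)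
  case (delete i a b) then show ?case using coxeter_step.insert[of i N a b] by simp
next
  case (insert i a b) then show ?case using coxeter_step.delete[of i N a b] by simp
next
  case (braid i a b) then show ?case using coxeter_step.braid_rev[of i N a b] by simp
next
  case (braid_rev i a b) then show ?case using coxeter_step.braid[of i N a b] by simp
next
  case (commute i j a b) then show ?case using coxeter_step.commute[of j N i a b] by auto
qed

lemma coxeter_equiv_sym: "coxeter_equiv N u v \<Longrightarrow> coxeter_equiv N v u"
  unfolding coxeter_equiv_def
  by (induction rule: rtranclp_induct) (auto intro: converse_rtranclp_into_rtranclp coxeter_step_sym)

lemma coxeter_step_cong: "coxeter_step N u v \<Longrightarrow> coxeter_step N (c @ u @ d) (c @ v @ d)"
proof (induction rule: coxeter_step.induct)
  case (delete i a b) then show ?case using coxeter_step.delete[of i N "c @ a" "b @ d"] by simp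
next
  case (insert i a b) then show ?case using coxeter_step.insert[of i N "c @ a" "b @ d"] by simp
next
  case (braid i a b) then show ?case using coxeter_step.braid[of i N "c @ a" "b @ d"] by simp
next
  case (braid_rev i a b) then show ?case using coxeter_step.braid_rev[of i N "c @ a" "b @ d"] by simp
next
  case (commute i j a b) then show ?case using coxeter_step.commute[of i N j "c @ a" "b @ d"] by simp
qed

lemma coxeter_equiv_cong: "coxeter_equiv N u v \<Longrightarrow> coxeter_equiv N (c @ u @ d) (c @ v @ d)"
  unfolding coxeter_equiv_def
proof (induction rule: rtranclp_induct)
  case (step y z) then show ?case by (meson coxeter_step_cong rtranclp.simps)
qed simp

lemma coxeter_equiv_append_left: "coxeter_equiv N u v \<Longrightarrow> coxeter_equiv N (c @ u) (c @ v)"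
  using coxeter_equiv_cong[of N u v c "[]"] by simp

lemma coxeter_equiv_append_right: "coxeter_equiv N u v \<Longrightarrow> coxeter_equiv N (u @ d) (v @ d)"
  using coxeter_equiv_cong[of N u v "[]" d] by simp

lemma coxeter_step_mono: "coxeter_step N u v \<Longrightarrow> N \<le> M \<Longrightarrow> coxeter_step M u v"
  by (induction rule: coxeter_step.induct) (auto intro!: coxeter_step.intros)

lemma coxeter_equiv_mono: "coxeter_equiv N u v \<Longrightarrow> N \<le> M \<Longrightarrow> coxeter_equiv M u v"
  unfolding coxeter_equiv_def
proof (induction rule: rtranclp_induct)
  case (step y z) then show ?case by (meson coxeter_step_mono rtranclp.simps)
qed simp

lemma coxeter_step_within: "coxeter_step N u v \<Longrightarrow> within N u \<Longrightarrow> within N v"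
  by (induction rule: coxeter_step.induct) auto

lemma coxeter_equiv_within: "coxeter_equiv N u v \<Longrightarrow> within N u \<Longrightarrow> within N v"
  unfolding coxeter_equiv_def by (induction rule: rtranclp_induct) (auto dest: coxeter_step_within)

lemma coxeter_equiv_delete: "Suc i < N \<Longrightarrow> coxeter_equiv N (a @ i # i # b) (a @ b)"
  by (simp add: coxeter_equiv_def coxeter_step.delete r_into_rtranclp)

lemma coxeter_equiv_braid:
  "Suc (Suc i) < N \<Longrightarrow> coxeter_equiv N (a @ i # Suc i # i # b) (a @ Suc i # i # Suc i # b)"
  by (simp add: coxeter_equiv_def coxeter_step.braid r_into_rtranclp)

lemma coxeter_equiv_commute_Cons:
  assumes "Suc j < N" "within N P" "\<forall>p\<in>set P. Suc (Suc j) \<le> p \<or> Suc (Suc p) \<le> j"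
  shows "coxeter_equiv N (j # P) (P @ [j])"
  using assms
proof (induction P)
  case (Cons p P)
  have "coxeter_step N ([] @ j # p # P) ([] @ p # j # P)"
    using Cons by (intro coxeter_step.commute) auto
  then have "coxeter_equiv N (j # p # P) (p # j # P)"
    by (simp add: coxeter_equiv_def)
  also have "coxeter_equiv N (p # j # P) (p # P @ [j])"
    using Cons coxeter_equiv_append_left[of N "j # P" "P @ [j]" "[p]"] by simp
  finally show ?case by simp
qed simp

lemma coxeter_equiv_commute:
  assumes "within N P" "within N Q" "\<forall>p\<in>set P. \<forall>q\<in>set Q. Suc (Suc q) \<le> p \<or> Suc (Suc p) \<le> q"
  shows "coxeter_equiv N (Q @ P) (P @ Q)"
  using assms
proof (induction Q)
  case (Cons q Q)
  have "coxeter_equiv N (q # Q @ P) (q # P @ Q)"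
    using Cons coxeter_equiv_append_left[of N "Q @ P" "P @ Q" "[q]"] by simp
  also have "coxeter_equiv N (q # P @ Q) (P @ [q] @ Q)"
    using Cons coxeter_equiv_append_right[OF coxeter_equiv_commute_Cons[of q N P], of Q] by simp
  finally show ?case by simp
qed simp

lemma coxeter_equiv_cancel: "within N w \<Longrightarrow> coxeter_equiv N (w @ rev w) []"
proof (induction w)
  case (Cons a w)
  have "coxeter_equiv N (a # w @ rev w @ [a]) [a, a]"
    using coxeter_equiv_cong[OF Cons.IH, of "[a]" "[a]"] Cons by simp
  also have "coxeter_equiv N [a, a] []"
    using coxeter_equiv_delete[of a N "[]" "[]"] Cons by simp
  finally show ?case by simp
qed simp

lemma apply_swaps_commute:
  assumes "Suc i < length y" "Suc j < length y" "Suc (Suc i) \<le> j"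
  shows "apply_swaps [i, j] y = apply_swaps [j, i] y"
proof -
  obtain A p q B where y: "y = A @ p # q # B" "length A = i"
    using split_nth2 assms by blast
  then have "Suc (j - Suc (Suc i)) < length B"
    using assms by auto
  then obtain C r s D where B: "B = C @ r # s # D" "length C = j - Suc (Suc i)"
    using split_nth2 by blast
  have "length (A @ p # q # C) = j" "length (A @ q # p # C) = j"
    using y B assms by auto
  then show ?thesis
    using y B swap_at_append_Cons[of "A @ p # q # C" j] swap_at_append_Cons[of "A @ q # p # C" j]
      swap_at_append_Cons[of A i] by simp
qed

lemma apply_swaps_delete: "Suc i < length y \<Longrightarrow> apply_swaps [i, i] y = y"
  by (auto dest!: split_nth2 simp: swap_at_append_Cons)

lemma apply_swaps_braid: "Suc (Suc i) < length y \<Longrightarrow> apply_swaps [i, Suc i, i] y = apply_swaps [Suc i, i, Suc i] y"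
proof -
  assume "Suc (Suc i) < length y"
  then obtain A a b c B where "y = A @ a # b # c # B" "length A = i"
    using split_nth3 by blast
  then show ?thesis
    using swap_at_append_Cons[of "A @ [_]" "Suc i"] swap_at_append_Cons[of A i] by simp
qed

lemma coxeter_step_apply_swaps:
  "coxeter_step N u v \<Longrightarrow> within N u \<Longrightarrow> length x = N \<Longrightarrow> apply_swaps u x = apply_swaps v x"
proof (induction rule: coxeter_step.induct)
  case (delete i a b)
  then show ?case using apply_swaps_delete[of i "apply_swaps a x"] by (simp add: apply_swaps_append)
next
  case (insert i a b)
  then show ?case using apply_swaps_delete[of i "apply_swaps a x"] by (simp add: apply_swaps_append)
next
  case (braid i a b)
  then show ?case using apply_swaps_braid[of i "apply_swaps a x"] by (simp add: apply_swaps_append)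
next
  case (braid_rev i a b)
  then show ?case using apply_swaps_braid[of i "apply_swaps a x"] by (simp add: apply_swaps_append)
next
  case (commute i j a b)
  then show ?case
    using apply_swaps_commute[of i "apply_swaps a x" j] apply_swaps_commute[of j "apply_swaps a x" i]
    by (auto simp: apply_swaps_append)
qed

lemma coxeter_equiv_apply_swaps:
  "coxeter_equiv N u v \<Longrightarrow> within N u \<Longrightarrow> length x = N \<Longrightarrow> apply_swaps u x = apply_swaps v x"
  unfolding coxeter_equiv_def
proof (induction rule: rtranclp_induct)
  case (step y z)
  have "within N y"
    using step coxeter_equiv_within[of N u y] by (simp add: coxeter_equiv_def)
  then show ?case using step coxeter_step_apply_swaps by metis
qed simp

lemma apply_swaps_cancel: "within (length x) u \<Longrightarrow> apply_swaps (u @ rev u) x = x"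
  using coxeter_equiv_apply_swaps[OF coxeter_equiv_cancel[of "length x" u], of x] by simp

lemma apply_swaps_rev_upt_Cons: "apply_swaps (rev [0..<length A]) (A @ y # B) = y # A @ B"
proof -
  have "apply_swaps [0..<length A] (y # A @ B) = A @ y # B"
    using apply_swaps_upt_mid[of "[]" A y B] by simp
  then show ?thesis
    using apply_swaps_cancel[of "y # A @ B" "[0..<length A]"]
    by (simp add: apply_swaps_append within_upt)
qed

lemma coxeter_step_equiv_at:
  "coxeter_step N u v \<Longrightarrow> within N u \<Longrightarrow> length x = N \<Longrightarrow> equiv_at x (virtual u) (virtual v)"
proof (induction rule: coxeter_step.induct)
  case (delete i a b)
  have "equiv_at (apply_swaps a x) [V i, V i] []"
    using delete by (intro equiv_at_V2) auto
  from equiv_at_virtual_cong[OF this, of "virtual b"] show ?case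
    using delete by simp
next
  case (insert i a b)
  have "equiv_at (apply_swaps a x) [] [V i, V i]"
    using insert by (intro equiv_at_sym[OF equiv_at_V2]) auto
  from equiv_at_virtual_cong[OF this, of "virtual b"] show ?case
    using insert by simp
next
  case (braid i a b)
  have "equiv_at (apply_swaps a x) [V i, V (Suc i), V i] [V (Suc i), V i, V (Suc i)]"
    using braid by (intro equiv_at_V3) auto
  from equiv_at_virtual_cong[OF this, of "virtual b"] show ?case
    using braid by simp
next
  case (braid_rev i a b)
  have "equiv_at (apply_swaps a x) [V (Suc i), V i, V (Suc i)] [V i, V (Suc i), V i]"
    using braid_rev by (intro equiv_at_sym[OF equiv_at_V3]) auto
  from equiv_at_virtual_cong[OF this, of "virtual b"] show ?case
    using braid_rev by simp
next
  case (commute i j a b)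
  have lx: "length (apply_swaps a x) = N"
    using commute by simp
  have "equiv_at (apply_swaps a x) [V i, V j] [V j, V i]"
  proof (cases "Suc (Suc i) \<le> j")
    case True
    have "equiv_at (apply_swaps a x) [V i, setpos (V j) (pos (V j) + bot_ar (V i) - top_ar (V i))] [V j, V i]"
      using True commute lx by (intro equiv_at_interchange') (auto simp: swap_at_def)
    then show ?thesis by simp
  next
    case False
    then have "equiv_at (apply_swaps a x) [V i, V j] [V j, setpos (V i) (pos (V i) + bot_ar (V j) - top_ar (V j))]"
      using commute lx by (intro equiv_at_interchange) (auto simp: swap_at_def)
    then show ?thesis by simp
  qed
  from equiv_at_virtual_cong[OF this, of "virtual b"] show ?case
    using commute by simp
qed

lemma coxeter_equiv_equiv_at:
  "coxeter_equiv N u v \<Longrightarrow> within N u \<Longrightarrow> length x = N \<Longrightarrow> equiv_at x (virtual u) (virtual v)"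
  unfolding coxeter_equiv_def
proof (induction rule: rtranclp_induct)
  case (step y z)
  have "within N y"
    using step coxeter_equiv_within[of N u y] by (simp add: coxeter_equiv_def)
  then show ?case using step coxeter_step_equiv_at equiv_at_trans by blast
qed simp

lemma virtual_cancel: "within (length x) w \<Longrightarrow> equiv_at x (virtual (w @ rev w)) []"
  using coxeter_equiv_equiv_at[OF coxeter_equiv_cancel[of "length x" w], of x] by simp

lemma virtual_cancel': "within (length x) w \<Longrightarrow> equiv_at x (virtual (rev w @ w)) []"
  using virtual_cancel[of x "rev w"] by simp

text \<open>The word \<open>[a..<L]\<close> moves the entry at position \<open>a\<close> to position \<open>L\<close>.\<close>

lemma coxeter_equiv_cycles:
  "b < L \<Longrightarrow> L < N \<Longrightarrow> coxeter_equiv N ([b..<L] @ [b..<L-1] @ [L-1]) ([Suc b..<L] @ [b..<L-1])"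
proof (induction "L - Suc b" arbitrary: b)
  case 0
  then have "b = L - 1" "[b..<L] = [b]" "[b..<L-1] = []" "[Suc b..<L] = []"
    by (auto simp: upt_conv_Cons)
  then show ?case
    using 0 coxeter_equiv_delete[of "L-1" N "[]" "[]"] by simp
next
  case (Suc d)
  have bL: "Suc b < L"
    using Suc by auto
  have u1: "[b..<L] = b # Suc b # [Suc (Suc b)..<L]" and u2: "[b..<L-1] = b # [Suc b..<L-1]"
    and u3: "[Suc b..<L] = Suc b # [Suc (Suc b)..<L]"
    using bL by (simp_all add: upt_conv_Cons)
  have c: "coxeter_equiv N ([Suc (Suc b)..<L] @ [b]) ([b] @ [Suc (Suc b)..<L])"
    using Suc bL by (intro coxeter_equiv_commute) (auto simp: within_upt within_def)
  have "coxeter_equiv N ([b..<L] @ [b..<L-1] @ [L-1])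
      ([b, Suc b] @ ([Suc (Suc b)..<L] @ [b]) @ ([Suc b..<L-1] @ [L-1]))"
    unfolding u1 u2 by simp
  also have "coxeter_equiv N \<dots> ([b, Suc b] @ ([b] @ [Suc (Suc b)..<L]) @ ([Suc b..<L-1] @ [L-1]))"
    using coxeter_equiv_cong[OF c] by blast
  also have "\<dots> = [] @ b # Suc b # b # ([Suc (Suc b)..<L] @ [Suc b..<L-1] @ [L-1])"
    by simp
  also have "coxeter_equiv N \<dots> ([] @ Suc b # b # Suc b # ([Suc (Suc b)..<L] @ [Suc b..<L-1] @ [L-1]))"
    using bL Suc by (intro coxeter_equiv_braid) auto
  also have "\<dots> = [Suc b, b] @ ([Suc b..<L] @ [Suc b..<L-1] @ [L-1])"
    unfolding u3 by simp
  also have "coxeter_equiv N \<dots> ([Suc b, b] @ ([Suc (Suc b)..<L] @ [Suc b..<L-1]))"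
    using Suc bL by (intro coxeter_equiv_append_left Suc.hyps) auto
  also have "\<dots> = [Suc b] @ ([b] @ [Suc (Suc b)..<L]) @ [Suc b..<L-1]"
    by simp
  also have "coxeter_equiv N \<dots> ([Suc b] @ ([Suc (Suc b)..<L] @ [b]) @ [Suc b..<L-1])"
    using coxeter_equiv_cong[OF coxeter_equiv_sym[OF c]] by blast
  also have "\<dots> = [Suc b..<L] @ [b..<L-1]"
    unfolding u2 u3 by simp
  finally show ?case .
qed

lemma coxeter_equiv_cycles_le:
  assumes "a \<le> b" "b < L" "L < N"
  shows "coxeter_equiv N ([a..<L] @ [b..<L-1] @ [L-1]) ([Suc b..<L] @ [a..<L-1])"
proof -
  have s1: "[a..<L] = [a..<b] @ [b..<L]" and s2: "[a..<L-1] = [a..<b] @ [b..<L-1]"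
    using assms by (metis le_add_diff_inverse le_trans less_imp_le_nat upt_add_eq_append,
        metis Suc_diff_1 bot_nat_0.not_eq_extremum le_trans less_Suc_eq_le less_nat_zero_code
        upt_add_eq_append le_add_diff_inverse)
  have "[a..<L] @ [b..<L-1] @ [L-1] = [a..<b] @ ([b..<L] @ [b..<L-1] @ [L-1])"
    by (simp add: s1)
  also have "coxeter_equiv N \<dots> ([a..<b] @ ([Suc b..<L] @ [b..<L-1]))"
    using assms by (intro coxeter_equiv_append_left coxeter_equiv_cycles) auto
  also have "\<dots> = ([a..<b] @ [Suc b..<L]) @ [b..<L-1]"
    by simp
  also have "coxeter_equiv N \<dots> (([Suc b..<L] @ [a..<b]) @ [b..<L-1])"
    using assms by (intro coxeter_equiv_append_right coxeter_equiv_commute) (auto simp: within_upt)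
  also have "\<dots> = [Suc b..<L] @ [a..<L-1]"
    unfolding s2 by simp
  finally show ?thesis .
qed

lemma coxeter_equiv_cycles_gt:
  assumes "c < j" "j \<le> L" "L < N"
  shows "coxeter_equiv N ([j..<L] @ [c..<L-1] @ [L-1]) ([c..<L] @ [j-1..<L-1])"
proof -
  have "coxeter_equiv N ([c..<L] @ [j-1..<L-1] @ [L-1]) ([Suc (j-1)..<L] @ [c..<L-1])"
    using assms by (intro coxeter_equiv_cycles_le) auto
  then have 1: "coxeter_equiv N ([c..<L] @ [j-1..<L-1] @ [L-1]) ([j..<L] @ [c..<L-1])"
    using assms by simp
  have "coxeter_equiv N ([j..<L] @ [c..<L-1] @ [L-1]) (([c..<L] @ [j-1..<L-1] @ [L-1]) @ [L-1])"
    using coxeter_equiv_append_right[OF coxeter_equiv_sym[OF 1], of "[L-1]"] by simp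
  also have "coxeter_equiv N \<dots> ([c..<L] @ [j-1..<L-1])"
    using assms coxeter_equiv_delete[of "L-1" N "[c..<L] @ [j-1..<L-1]" "[]"] by simp
  finally show ?thesis .
qed

fun index_of :: "'a \<Rightarrow> 'a list \<Rightarrow> nat" where
  "index_of x [] = 0"
| "index_of x (a # xs) = (if a = x then 0 else Suc (index_of x xs))"

lemma index_of_append_Cons: "y \<notin> set A \<Longrightarrow> index_of y (A @ y # B) = length A"
  by (induction A) auto

primrec sorting_word :: "nat \<Rightarrow> 'a list \<Rightarrow> 'a list \<Rightarrow> nat list" where
  "sorting_word 0 xs ys = []"
| "sorting_word (Suc n) xs ys =
     [index_of (last ys) xs..<n] @ sorting_word n (remove1 (last ys) xs) (butlast ys)"

lemma sorting_word_Suc: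
  "y \<notin> set A \<Longrightarrow> sorting_word (Suc n) (A @ y # B) (ys @ [y]) = [length A..<n] @ sorting_word n (A @ B) ys"
  by (simp add: index_of_append_Cons remove1_append)

lemma split_last_distinct:
  assumes "distinct ys" "set ys = set xs" "distinct xs" "ys \<noteq> []"
  obtains A B ys' where "ys = ys' @ [last ys]" "xs = A @ last ys # B" "last ys \<notin> set A"
    "last ys \<notin> set B" "distinct ys'" "set ys' = set (A @ B)" "distinct (A @ B)" "last ys \<notin> set ys'"
    "length ys' = length A + length B"
proof -
  define y where "y = last ys"
  have ys: "ys = butlast ys @ [y]"
    using assms unfolding y_def by simp
  have "y \<in> set xs"
    using assms unfolding y_def by (metis last_in_set)
  then obtain A B where xs: "xs = A @ y # B"
    by (metis split_list)
  have "distinct (butlast ys @ [y])"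
    using assms ys by simp
  then have dys: "distinct (butlast ys)" "y \<notin> set (butlast ys)"
    by auto
  have "set (butlast ys @ [y]) = set (A @ y # B)"
    using assms xs ys by simp
  then have "set (butlast ys) = set (A @ B)"
    using dys xs assms by auto
  moreover have "length (butlast ys) = length A + length B"
    using distinct_card[of "butlast ys"] distinct_card[of "A @ B"] calculation dys assms xs by simp
  ultimately show ?thesis
    using that[of "butlast ys" A B] ys xs dys assms unfolding y_def[symmetric] by auto
qed

lemma sorting_word_correct:
  "length xs = N \<Longrightarrow> distinct xs \<Longrightarrow> distinct ys \<Longrightarrow> set ys = set xs \<Longrightarrow>
   within N (sorting_word N xs ys) \<and> apply_swaps (sorting_word N xs ys) xs = ys"
proof (induction N arbitrary: xs ys)
  case (Suc n)
  then have "ys \<noteq> []"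
    using distinct_card[of ys] distinct_card[of xs] by auto
  then obtain A B ys' where d: "ys = ys' @ [last ys]" "xs = A @ last ys # B" "last ys \<notin> set A"
    "distinct ys'" "set ys' = set (A @ B)" "distinct (A @ B)"
    using split_last_distinct[of ys xs] Suc.prems by metis
  have ln: "n = length A + length B"
    using Suc d by simp
  have IH: "within n (sorting_word n (A @ B) ys') \<and> apply_swaps (sorting_word n (A @ B) ys') (A @ B) = ys'"
    using Suc d ln by (intro Suc.IH) auto
  have w: "sorting_word (Suc n) xs ys = [length A..<length A + length B] @ sorting_word n (A @ B) ys'"
    using sorting_word_Suc[of "last ys" A n B ys'] d ln by simp
  have "apply_swaps (sorting_word (Suc n) xs ys) xs
      = apply_swaps (sorting_word n (A @ B) ys') ((A @ B) @ [last ys])"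
    using w d by (simp add: apply_swaps_append apply_swaps_upt_Cons)
  also have "\<dots> = ys"
    using IH ln d apply_swaps_prefix[of "A @ B" _ "[last ys]"] by simp
  finally show ?case
    using w IH ln by (auto simp: within_upt intro: within_mono)
qed simp

lemma sorting_word_self: "length xs = N \<Longrightarrow> distinct xs \<Longrightarrow> sorting_word N xs xs = []"
proof (induction N arbitrary: xs)
  case (Suc n)
  then obtain xs' y where xs: "xs = xs' @ [y]"
    by (metis length_Suc_conv_rev rev_eq_Cons_iff)
  then have "y \<notin> set xs'" "length xs' = n" "distinct xs'"
    using Suc.prems by auto
  then show ?case
    using Suc.IH sorting_word_Suc[of y xs' n "[]" xs'] xs by simp
qed simp

lemma sorting_word_swap_last:
  assumes "length xs = Suc (Suc i)" "distinct xs" "distinct ys" "set ys = set xs"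
  shows "coxeter_equiv (Suc (Suc i)) (sorting_word (Suc (Suc i)) xs ys @ [i])
    (sorting_word (Suc (Suc i)) xs (swap_at i ys))"
proof -
  let ?N = "Suc (Suc i)"
  have "ys \<noteq> []"
    using assms distinct_card[of ys] distinct_card[of xs] by auto
  then obtain A B ys' where d: "ys = ys' @ [last ys]" "xs = A @ last ys # B" "last ys \<notin> set A"
    "last ys \<notin> set B" "distinct ys'" "set ys' = set (A @ B)" "distinct (A @ B)" "last ys \<notin> set ys'"
    "length ys' = length A + length B"
    using split_last_distinct[of ys xs] assms by metis
  define y where "y = last ys"
  have "ys' \<noteq> []"
    using assms d by (auto simp: y_def)
  then obtain Z1 Z2 ys'' where d2: "ys' = ys'' @ [last ys']" "A @ B = Z1 @ last ys' # Z2"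
    "last ys' \<notin> set Z1" "last ys' \<notin> set Z2" "distinct ys''" "set ys'' = set (Z1 @ Z2)"
    "distinct (Z1 @ Z2)" "length ys'' = length Z1 + length Z2"
    using split_last_distinct[of ys' "A @ B"] d by metis
  define z where "z = last ys'"
  have lAB: "length (A @ B) = Suc i"
    using assms(1) d(2) by simp
  then have lys'': "length ys'' = i"
    using d(9) d2(2,8) by (metis add_Suc_right length_append length_Cons nat.inject)
  let ?tail = "sorting_word i (Z1 @ Z2) ys''"
  have tail: "within i ?tail"
    using sorting_word_correct[of "Z1 @ Z2" i ys''] d2 lAB by simp
  have zy: "z \<noteq> y"
    using d(8) \<open>ys' \<noteq> []\<close> unfolding y_def z_def by (auto dest: last_in_set)
  have "ys = (ys'' @ [z]) @ [y]"
    using d(1) d2(1) unfolding y_def z_def by metis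
  then have sw: "swap_at i ys = ys'' @ [y, z]"
    using lys'' swap_at_append_Cons[of ys'' i] by simp
  have "sorting_word (Suc i) (A @ B) ys' = [length Z1..<i] @ ?tail"
    using sorting_word_Suc[of z Z1 i Z2 ys''] d2 unfolding z_def by simp
  then have w: "sorting_word ?N xs ys = [length A..<Suc i] @ [length Z1..<i] @ ?tail"
    using d sorting_word_Suc[of y A "Suc i" B ys'] unfolding y_def by simp
  have "coxeter_equiv ?N (?tail @ [i]) ([i] @ ?tail)"
    using tail by (intro coxeter_equiv_commute) (auto simp: within_def)
  then have L: "coxeter_equiv ?N (sorting_word ?N xs ys @ [i])
      (([length A..<Suc i] @ [length Z1..<i] @ [i]) @ ?tail)"
    using coxeter_equiv_append_left[of ?N _ _ "[length A..<Suc i] @ [length Z1..<i]"] w by simp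
  show ?thesis
  proof (cases "z \<in> set A")
    case True
    then obtain A1 A2 where A: "A = A1 @ z # A2"
      by (metis split_list)
    have zA: "z \<notin> set A1" "z \<notin> set A2" "y \<notin> set (A1 @ A2)"
      using d A unfolding y_def by auto
    have "Z1 @ z # Z2 = A1 @ z # (A2 @ B)"
      using d2(2) A unfolding z_def by simp
    then have Z: "Z1 = A1" "Z2 = A2 @ B"
      using append_Cons_eq_iff[of z Z1 Z2 A1 "A2 @ B"] d2(3,4) unfolding z_def by auto
    have "sorting_word ?N xs (swap_at i ys) = [length A1..<Suc i] @ sorting_word (Suc i) (A1 @ A2 @ y # B) (ys'' @ [y])"
      using sorting_word_Suc[of z A1 "Suc i" "A2 @ y # B" "ys'' @ [y]"] zA d A sw
      unfolding y_def by simp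
    also have "\<dots> = [length A1..<Suc i] @ [length A1 + length A2..<i] @ ?tail"
      using sorting_word_Suc[of y "A1 @ A2" i B ys''] zA Z by simp
    finally have R: "sorting_word ?N xs (swap_at i ys) = ([length Z1..<Suc i] @ [length A - 1..<i]) @ ?tail"
      using A Z by simp
    have "coxeter_equiv ?N ([length A..<Suc i] @ [length Z1..<i] @ [i]) ([length Z1..<Suc i] @ [length A - 1..<i])"
      using A Z lAB coxeter_equiv_cycles_gt[of "length Z1" "length A" "Suc i" ?N] by simp
    then show ?thesis
      unfolding R by (intro coxeter_equiv_trans[OF L] coxeter_equiv_append_right)
  next
    case False
    then obtain B1 B2 where B: "B = B1 @ z # B2"
      using d2(2) unfolding z_def by (metis Un_iff in_set_conv_decomp set_append)
    have zB: "z \<notin> set B1" "z \<notin> set B2" "z \<notin> set (A @ y # B1)"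
      using d(3,7) B False zy unfolding z_def by auto
    have "Z1 @ z # Z2 = (A @ B1) @ z # B2"
      using d2(2) B unfolding z_def by simp
    then have Z: "Z1 = A @ B1" "Z2 = B2"
      using append_Cons_eq_iff[of z Z1 Z2 "A @ B1" B2] d2(3,4) unfolding z_def by auto
    have "sorting_word ?N xs (swap_at i ys)
        = [Suc (length A + length B1)..<Suc i] @ sorting_word (Suc i) (A @ y # B1 @ B2) (ys'' @ [y])"
      using sorting_word_Suc[of z "A @ y # B1" "Suc i" B2 "ys'' @ [y]"] zB d B sw
      unfolding y_def by simp
    also have "\<dots> = [Suc (length A + length B1)..<Suc i] @ [length A..<i] @ ?tail"
      using sorting_word_Suc[of y A i "B1 @ B2" ys''] d Z unfolding y_def by simp
    finally have R: "sorting_word ?N xs (swap_at i ys) = ([Suc (length Z1)..<Suc i] @ [length A..<i]) @ ?tail"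
      using Z by simp
    have "coxeter_equiv ?N ([length A..<Suc i] @ [length Z1..<i] @ [i]) ([Suc (length Z1)..<Suc i] @ [length A..<i])"
      using B Z lAB coxeter_equiv_cycles_le[of "length A" "length Z1" "Suc i" ?N] by simp
    then show ?thesis
      unfolding R by (intro coxeter_equiv_trans[OF L] coxeter_equiv_append_right)
  qed
qed

lemma sorting_word_swap:
  "length xs = N \<Longrightarrow> distinct xs \<Longrightarrow> distinct ys \<Longrightarrow> set ys = set xs \<Longrightarrow> Suc i < N \<Longrightarrow>
   coxeter_equiv N (sorting_word N xs ys @ [i]) (sorting_word N xs (swap_at i ys))"
proof (induction N arbitrary: xs ys)
  case (Suc n)
  show ?case
  proof (cases "Suc i < n")
    case True
    have "ys \<noteq> []"
      using Suc.prems distinct_card[of ys] distinct_card[of xs] by auto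
    then obtain A B ys' where d: "ys = ys' @ [last ys]" "xs = A @ last ys # B" "last ys \<notin> set A"
      "distinct ys'" "set ys' = set (A @ B)" "distinct (A @ B)" "length ys' = length A + length B"
      using split_last_distinct[of ys xs] Suc.prems by metis
    have len: "length ys' = n" "length (A @ B) = n"
      using Suc.prems(1) d(2,7) by simp_all
    have "swap_at i ys = swap_at i ys' @ [last ys]"
      using apply_swaps_prefix[of ys' "[i]" "[last ys]"] d(1) True len by simp
    then have w: "sorting_word (Suc n) xs ys = [length A..<n] @ sorting_word n (A @ B) ys'"
      "sorting_word (Suc n) xs (swap_at i ys) = [length A..<n] @ sorting_word n (A @ B) (swap_at i ys')"
      using d sorting_word_Suc[of "last ys" A n B] by (metis, metis)
    have "coxeter_equiv n (sorting_word n (A @ B) ys' @ [i]) (sorting_word n (A @ B) (swap_at i ys'))"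
      using d True len by (intro Suc.IH) auto
    then show ?thesis
      using w coxeter_equiv_append_left[OF coxeter_equiv_mono] by fastforce
  next
    case False
    then obtain i' where "n = Suc i" using Suc.prems by (cases n) auto
    then show ?thesis
      using sorting_word_swap_last Suc.prems by blast
  qed
qed simp

lemma coxeter_equiv_sorting_word:
  "within N u \<Longrightarrow> coxeter_equiv N u (sorting_word N [0..<N] (apply_swaps u [0..<N]))"
proof (induction u rule: rev_induct)
  case Nil
  then show ?case using sorting_word_self[of "[0..<N]" N] by simp
next
  case (snoc i u)
  then have "coxeter_equiv N (u @ [i]) (sorting_word N [0..<N] (apply_swaps u [0..<N]) @ [i])"
    by (intro coxeter_equiv_append_right) auto
  also have "coxeter_equiv N \<dots> (sorting_word N [0..<N] (swap_at i (apply_swaps u [0..<N])))"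
    using snoc set_apply_swaps[of "[0..<N]" u] by (intro sorting_word_swap) auto
  finally show ?case by (simp add: apply_swaps_append)
qed

theorem coxeter_equiv_if_same_permutation:
  "within N u \<Longrightarrow> within N v \<Longrightarrow> apply_swaps u [0..<N] = apply_swaps v [0..<N] \<Longrightarrow> coxeter_equiv N u v"
  using coxeter_equiv_sorting_word[of N u] coxeter_equiv_sorting_word[of N v]
    coxeter_equiv_sym coxeter_equiv_trans by metis

text \<open>The row of orientations below \<open>k\<close> nested caps.\<close>

definition nested_row :: "nat \<Rightarrow> bool list" where
  "nested_row k = replicate k True @ replicate k False"

lemma length_nested_row [simp]: "length (nested_row k) = 2 * k"
  by (simp add: nested_row_def)

lemma map_upt_nested_row: "map (\<lambda>x. x < k) [0..<2*k] = nested_row k"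
proof -
  have "[0..<2*k] = [0..<k] @ [k..<2*k]"
    using upt_add_eq_append[of 0 k k] by (simp add: mult_2)
  moreover have "map (\<lambda>x. x < k) [0..<k] = replicate k True" "map (\<lambda>x. x < k) [k..<2*k] = replicate k False"
    by (auto intro: nth_equalityI)
  ultimately show ?thesis by (simp add: nested_row_def)
qed

lemma set_eq_if_distinct_subset:
  "set xs \<subseteq> {a..<a + k} \<Longrightarrow> distinct xs \<Longrightarrow> length xs = k \<Longrightarrow> set xs = {a..<a + k}"
  by (metis card_atLeastLessThan card_subset_eq distinct_card finite_atLeastLessThan add_diff_cancel_left')

lemma stabilizer_decomp:
  assumes "within (2*k) u" "apply_swaps u (nested_row k) = nested_row k"
  shows "\<exists>u1 u2. within k u1 \<and> within k u2 \<and> coxeter_equiv (2*k) u (u1 @ map ((+) k) u2)"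
proof -
  define ys where "ys = apply_swaps u [0..<2*k]"
  have dy: "distinct ys" "set ys = {0..<2*k}" "length ys = 2 * k"
    using set_apply_swaps[of "[0..<2*k]" u] assms unfolding ys_def by auto
  have "map (\<lambda>x. x < k) ys = nested_row k"
    using assms apply_swaps_map[of "[0..<2*k]" u "\<lambda>x. x < k"] map_upt_nested_row unfolding ys_def by simp
  then have m: "map (\<lambda>x. x < k) (take k ys) = replicate k True" "map (\<lambda>x. x < k) (drop k ys) = replicate k False"
    unfolding nested_row_def by (metis append_eq_conv_conj length_replicate take_map drop_map)+
  have d: "distinct (take k ys)" "distinct (drop k ys)" "length (take k ys) = k" "length (drop k ys) = k"
    using dy by auto
  have "\<forall>x\<in>set (take k ys). x < k"
    using m(1) by (metis in_set_replicate list.set_map imageI)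
  then have "set (take k ys) \<subseteq> {0..<0 + k}"
    by auto
  then have e1: "set (take k ys) = {0..<k}"
    using set_eq_if_distinct_subset d by fastforce
  have "\<forall>x\<in>set (drop k ys). \<not> x < k"
    using m(2) by (metis in_set_replicate list.set_map imageI)
  moreover have "set (drop k ys) \<subseteq> {0..<k + k}"
    using dy(2) set_drop_subset[of k ys] by (simp add: mult_2)
  ultimately have "set (drop k ys) \<subseteq> {k..<k + k}"
    by fastforce
  then have e2: "set (drop k ys) = {k..<k + k}"
    using set_eq_if_distinct_subset d by blast
  obtain u1 where u1: "within k u1" "apply_swaps u1 [0..<k] = take k ys"
    using sorting_word_correct[of "[0..<k]" k "take k ys"] d e1 by auto
  obtain u2 where u2: "within k u2" "apply_swaps u2 [k..<2*k] = drop k ys"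
    using sorting_word_correct[of "[k..<2*k]" k "drop k ys"] d e2 by (auto simp: mult_2)
  have split: "[0..<2*k] = [0..<k] @ [k..<2*k]"
    using upt_add_eq_append[of 0 k k] by (simp add: mult_2)
  have "apply_swaps (u1 @ map ((+) k) u2) [0..<2*k]
      = apply_swaps (map ((+) k) u2) (apply_swaps u1 [0..<k] @ [k..<2*k])"
    using u1 by (simp add: apply_swaps_append split apply_swaps_prefix)
  also have "\<dots> = ys"
    using u1 u2 d(3) apply_swaps_shift[of "apply_swaps u1 [0..<k]" k "[k..<2*k]" u2] by simp
  finally have "coxeter_equiv (2*k) u (u1 @ map ((+) k) u2)"
    using assms u1 u2 unfolding ys_def
    by (intro coxeter_equiv_if_same_permutation) (auto simp: within_def)
  then show ?thesis
    using u1 u2 by blast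
qed

section \<open>Moving pieces through virtual words\<close>

lemma equiv_at_commute_right_of:
  assumes "\<forall>h\<in>set H. pos g + top_ar g \<le> pos h" "run x (H @ [g]) \<noteq> None"
  shows "equiv_at x (H @ [g]) (g # map (\<lambda>h. setpos h (pos h + bot_ar g - top_ar g)) H)"
  using assms
proof (induction H arbitrary: x)
  case (Cons h H)
  obtain x1 where x1: "step x h = Some x1"
    using Cons.prems by (auto split: option.splits)
  let ?sh = "\<lambda>h. setpos h (pos h + bot_ar g - top_ar g)"
  have "equiv_at x1 (H @ [g]) (g # map ?sh H)"
    using Cons x1 by (intro Cons.IH) auto
  then have 1: "equiv_at x (h # H @ [g]) (h # g # map ?sh H)"
    using equiv_at_append_left[of x1 _ _ x "[h]"] x1 by simp
  have "run x [h, g] \<noteq> None"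
    using equiv_at_run[OF 1] Cons.prems by (auto simp: run_append split: option.splits)
  then have "equiv_at x [h, g] [g, ?sh h]"
    using Cons.prems by (intro equiv_at_interchange) auto
  then have 2: "equiv_at x (h # g # map ?sh H) (g # ?sh h # map ?sh H)"
    using equiv_at_append_right[of x "[h, g]" "[g, ?sh h]" "map ?sh H"] by simp
  from equiv_at_trans[OF 1 2] show ?case
    by simp
qed simp

lemma equiv_at_commute_left_of:
  assumes "\<forall>h\<in>set H. pos h + top_ar h \<le> pos g \<and> top_ar h = bot_ar h" "run x (H @ [g]) \<noteq> None"
  shows "equiv_at x (H @ [g]) (g # H)"
  using assms
proof (induction H arbitrary: x)
  case (Cons h H)
  obtain x1 where x1: "step x h = Some x1"
    using Cons.prems by (auto split: option.splits)
  have "equiv_at x1 (H @ [g]) (g # H)"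
    using Cons x1 by (intro Cons.IH) auto
  then have 1: "equiv_at x (h # H @ [g]) (h # g # H)"
    using equiv_at_append_left[of x1 _ _ x "[h]"] x1 by simp
  have "run x [h, g] \<noteq> None"
    using equiv_at_run[OF 1] Cons.prems by (auto simp: run_append split: option.splits)
  then have "equiv_at x [h, setpos g (pos g + bot_ar h - top_ar h)] [g, h]"
    using Cons.prems by (intro equiv_at_interchange') auto
  then have "equiv_at x [h, g] [g, h]"
    using Cons.prems by simp
  then have 2: "equiv_at x (h # g # H) (g # h # H)"
    using equiv_at_append_right[of x "[h, g]" "[g, h]" H] by simp
  from equiv_at_trans[OF 1 2] show ?case
    by simp
qed simp

lemma virtual_commute_right:
  assumes "\<forall>q\<in>set w. pos g + top_ar g \<le> q" "run x (virtual w @ [g]) \<noteq> None"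
  shows "equiv_at x (virtual w @ [g]) (g # virtual (map (\<lambda>q. q + bot_ar g - top_ar g) w))"
  using equiv_at_commute_right_of[of "virtual w" g x] assms by (simp add: virtual_def comp_def)

lemma virtual_commute_left:
  assumes "\<forall>q\<in>set w. Suc (Suc q) \<le> pos g" "run x (virtual w @ [g]) \<noteq> None"
  shows "equiv_at x (virtual w @ [g]) (g # virtual w)"
  using equiv_at_commute_left_of[of "virtual w" g x] assms by (simp add: virtual_def)

lemma bar_through_V:
  assumes "Suc p < length x" "j' < length x"
  shows "\<exists>j. j < length x \<and> x ! j = swap_at p x ! j' \<and> equiv_at x [V p, Bar j'] [Bar j, V p]"
proof -
  consider "j' = p" | "j' = Suc p" | "j' < p" | "Suc (Suc p) \<le> j'"
    by linarith
  then show ?thesis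
  proof cases
    case 1
    then show ?thesis
      using equiv_at_sym[OF equiv_at_T1b[of p x]] assms nth_swap_at[of p x j'] by (intro exI[of _ "Suc p"]) auto
  next
    case 2
    then show ?thesis
      using equiv_at_sym[OF equiv_at_T1a[of p x]] assms nth_swap_at[of p x j'] by (intro exI[of _ p]) auto
  next
    case 3
    have "equiv_at x [V p, Bar j'] [Bar j', setpos (V p) (pos (V p) + bot_ar (Bar j') - top_ar (Bar j'))]"
      using 3 assms by (intro equiv_at_interchange) (auto simp: swap_at_def)
    then show ?thesis
      using assms 3 nth_swap_at[of p x j'] by (intro exI[of _ j']) auto
  next
    case 4
    have "equiv_at x [V p, setpos (Bar j') (pos (Bar j') + bot_ar (V p) - top_ar (V p))] [Bar j', V p]"
      using 4 assms by (intro equiv_at_interchange') (auto simp: swap_at_def)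
    then show ?thesis
      using assms 4 nth_swap_at[of p x j'] by (intro exI[of _ j']) auto
  qed
qed

lemma bar_through_virtual:
  "within (length x) u \<Longrightarrow> i < length x \<Longrightarrow>
   \<exists>j. j < length x \<and> x ! j = apply_swaps u x ! i \<and> equiv_at x (virtual u @ [Bar i]) (Bar j # virtual u)"
proof (induction u arbitrary: x)
  case (Cons p u)
  have p: "Suc p < length x"
    using Cons by simp
  obtain j' where j': "j' < length x" "swap_at p x ! j' = apply_swaps u (swap_at p x) ! i"
    "equiv_at (swap_at p x) (virtual u @ [Bar i]) (Bar j' # virtual u)"
    using Cons.IH[of "swap_at p x"] Cons.prems p by auto
  obtain j where j: "j < length x" "x ! j = swap_at p x ! j'" "equiv_at x [V p, Bar j'] [Bar j, V p]"
    using bar_through_V p j' by blast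
  have "equiv_at x ([V p] @ virtual u @ [Bar i]) ([V p] @ Bar j' # virtual u)"
    using p by (intro equiv_at_append_left[OF j'(3)]) (simp add: step_V del: step.simps)
  also have "\<dots> = [V p, Bar j'] @ virtual u"
    by simp
  also have "equiv_at x \<dots> ([Bar j, V p] @ virtual u)"
    using equiv_at_append_right[OF j(3)] .
  finally show ?case
    using j j' by auto
qed auto

lemma cap_through_V:
  assumes "Suc p < length x" "j' \<le> length x"
  shows "\<exists>j w. j \<le> length x \<and> within (length x + 2) w \<and> equiv_at x [V p, Cap d j'] (Cap d j # virtual w)"
proof -
  consider "j' \<le> p" | "Suc (Suc p) \<le> j'" | "j' = Suc p"
    by linarith
  then show ?thesis
  proof cases
    case 1
    have "equiv_at x [V p, Cap d j'] [Cap d j', setpos (V p) (pos (V p) + bot_ar (Cap d j') - top_ar (Cap d j'))]"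
      using 1 assms by (intro equiv_at_interchange) (auto simp: swap_at_def)
    then show ?thesis
      using assms 1 by (intro exI[of _ j'] exI[of _ "[Suc (Suc p)]"]) auto
  next
    case 2
    have "equiv_at x [V p, setpos (Cap d j') (pos (Cap d j') + bot_ar (V p) - top_ar (V p))] [Cap d j', V p]"
      using 2 assms by (intro equiv_at_interchange') (auto simp: swap_at_def)
    then show ?thesis
      using assms 2 by (intro exI[of _ j'] exI[of _ "[p]"]) auto
  next
    case 3
    obtain A b c B where x: "x = A @ b # c # B" "length A = p"
      using split_nth2 assms by blast
    have "equiv_at x [V p, Cap d (Suc p)] [V p, Cap d (Suc p), V p, V p]"
      using equiv_at_cong[OF equiv_at_sym[OF equiv_at_V2[of p "A @ c # d # (\<not> d) # b # B"]],
          of x "[V p, Cap d (Suc p)]" "[]"] x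
      by (simp add: nth_append)
    also have "equiv_at x \<dots> [V p, Cap d p, V (Suc p), V p]"
      using equiv_at_cong[OF equiv_at_sym[OF equiv_at_pfV_cap[of p "A @ c # b # B" d]], of x "[V p]" "[V p]"] x
      by (simp add: nth_append)
    also have "equiv_at x \<dots> [Cap d p, V (Suc (Suc p)), V (Suc p), V p]"
      using equiv_at_cong[OF equiv_at_interchange[of "Cap d p" "V p" x], of x "[]" "[V (Suc p), V p]"] x
      by (simp add: nth_append)
    finally show ?thesis
      using assms 3 by (intro exI[of _ p] exI[of _ "[Suc (Suc p), Suc p, p]"]) auto
  qed
qed

lemma cap_through_virtual:
  "within (length x) u \<Longrightarrow> i \<le> length x \<Longrightarrow>
   \<exists>j w. j \<le> length x \<and> within (length x + 2) w \<and> equiv_at x (virtual u @ [Cap d i]) (Cap d j # virtual w)"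
proof (induction u arbitrary: x)
  case Nil
  then show ?case by (intro exI[of _ i] exI[of _ "[]"]) auto
next
  case (Cons p u)
  have p: "Suc p < length x"
    using Cons by simp
  obtain j' w' where j': "j' \<le> length x" "within (length x + 2) w'"
    "equiv_at (swap_at p x) (virtual u @ [Cap d i]) (Cap d j' # virtual w')"
    using Cons.IH[of "swap_at p x"] Cons.prems p by auto
  obtain j w where j: "j \<le> length x" "within (length x + 2) w" "equiv_at x [V p, Cap d j'] (Cap d j # virtual w)"
    using cap_through_V p j' by blast
  have "equiv_at x ([V p] @ virtual u @ [Cap d i]) ([V p] @ Cap d j' # virtual w')"
    using p by (intro equiv_at_append_left[OF j'(3)]) (simp add: step_V del: step.simps)
  also have "\<dots> = [V p, Cap d j'] @ virtual w'"
    by simp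
  also have "equiv_at x \<dots> ((Cap d j # virtual w) @ virtual w')"
    using equiv_at_append_right[OF j(3)] .
  finally show ?case
    using j j' by (intro exI[of _ j] exI[of _ "w @ w'"]) auto
qed

lemma run_Cup_Some_iff:
  "run x [Cup c] = Some y \<longleftrightarrow> (\<exists>A a b B. x = A @ a # b # B \<and> length A = c \<and> a \<noteq> b \<and> y = A @ B)"
proof
  assume a: "run x [Cup c] = Some y"
  then have "Suc c < length x"
    by (auto split: if_splits)
  then obtain A a b B where "x = A @ a # b # B" "length A = c"
    using split_nth2 by blast
  then show "\<exists>A a b B. x = A @ a # b # B \<and> length A = c \<and> a \<noteq> b \<and> y = A @ B"
    using a by (auto simp: nth_append split: if_splits)
qed (auto simp: nth_append)

lemma Cup_row_inj:
  assumes "run a [Cup j] = Some y" "run b [Cup j] = Some y" "a ! j = b ! j"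
  shows "a = b"
proof -
  obtain A p q B where a: "a = A @ p # q # B" "length A = j" "p \<noteq> q" "y = A @ B"
    using assms(1) run_Cup_Some_iff by metis
  obtain A' p' q' B' where b: "b = A' @ p' # q' # B'" "length A' = j" "p' \<noteq> q'" "y = A' @ B'"
    using assms(2) run_Cup_Some_iff by metis
  have "A = A'" "B = B'"
    using a b by (metis append_eq_append_conv)+
  moreover have "p = p'"
    using assms(3) a b by (simp add: nth_append)
  ultimately show ?thesis
    using a b by (cases p; cases q; cases q') auto
qed

lemma cup_through_V:
  assumes "run x [Cup c] = Some y" "Suc p < length y"
  shows "\<exists>c' w. within (length x) w \<and> equiv_at x [Cup c, V p] (virtual w @ [Cup c'])"
proof -
  obtain A0 a0 b0 B0 where x0: "x = A0 @ a0 # b0 # B0" "length A0 = c" "a0 \<noteq> b0" "y = A0 @ B0"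
    using assms(1) run_Cup_Some_iff by metis
  have lx: "length x = length y + 2" "Suc c < length x"
    using x0 by auto
  consider "Suc (Suc p) \<le> c" | "c \<le> p" | "c = Suc p"
    by linarith
  then show ?thesis
  proof cases
    case 1
    have "equiv_at x [Cup c, V p] [V p, setpos (Cup c) (pos (Cup c) + bot_ar (V p) - top_ar (V p))]"
      using 1 assms x0 by (intro equiv_at_interchange) (auto simp: nth_append)
    then show ?thesis
      using lx 1 by (intro exI[of _ c] exI[of _ "[p]"]) auto
  next
    case 2
    have "equiv_at x [Cup c, setpos (V (Suc (Suc p))) (pos (V (Suc (Suc p))) + bot_ar (Cup c) - top_ar (Cup c))]
        [V (Suc (Suc p)), Cup c]"
      using 2 assms x0 by (intro equiv_at_interchange') (auto simp: nth_append)
    then show ?thesis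
      using lx assms 2 by (intro exI[of _ c] exI[of _ "[Suc (Suc p)]"]) auto
  next
    case 3
    obtain A e b f B where x: "x = A @ e # b # f # B" "length A = p"
      using split_nth3 lx 3 by (metis Suc_lessD)
    have bf: "b \<noteq> f"
      using assms x 3 by (auto simp: nth_append split: if_splits)
    have "B \<noteq> []"
      using lx x 3 assms by auto
    then obtain g B' where "B = g # B'"
      by (cases B) auto
    with x have x: "x = A @ e # b # f # g # B'" "length A = p"
      by simp_all
    have "equiv_at x [V p, V (Suc p), V (Suc (Suc p)), Cup p] [V p, V (Suc p), Cup p, V p]"
      using equiv_at_cong[OF equiv_at_interchange[of "Cup p" "V (Suc (Suc p))" "A @ b # f # e # g # B'"],
          of x "[V p, V (Suc p)]" "[]"] x bf
      by (simp add: nth_append)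
    also have "equiv_at x \<dots> [V p, V p, Cup (Suc p), V p]"
      using equiv_at_cong[OF equiv_at_sym[OF equiv_at_pfV_cup[where i=p and x="A @ b # e # f # g # B'"]],
          of x "[V p]" "[V p]"] x bf
      by (simp add: nth_append)
    also have "equiv_at x \<dots> [Cup (Suc p), V p]"
      using equiv_at_cong[OF equiv_at_V2[of p x], of x "[]" "[Cup (Suc p), V p]"] x
      by (simp add: nth_append)
    finally have F: "equiv_at x (virtual [p, Suc p, Suc (Suc p)] @ [Cup p]) [Cup (Suc p), V p]"
      by simp
    show ?thesis
      using 3 lx assms equiv_at_sym[OF F] by (intro exI[of _ p] exI[of _ "[p, Suc p, Suc (Suc p)]"]) auto
  qed
qed

lemma cup_through_virtual:
  "run x [Cup c] = Some y \<Longrightarrow> within (length y) u \<Longrightarrow>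
   \<exists>c' w. within (length x) w \<and> equiv_at x (Cup c # virtual u) (virtual w @ [Cup c'])"
proof (induction u arbitrary: x c y)
  case Nil
  then show ?case by (intro exI[of _ c] exI[of _ "[]"]) auto
next
  case (Cons p u)
  have p: "Suc p < length y"
    using Cons by simp
  obtain c' w0 where w0: "within (length x) w0" "equiv_at x [Cup c, V p] (virtual w0 @ [Cup c'])"
    using cup_through_V[OF Cons.prems(1) p] by blast
  have rx0: "run x (virtual w0) = Some (apply_swaps w0 x)"
    using w0 run_virtual by blast
  have "run x ([Cup c] @ [V p]) = Some (swap_at p y)"
    using run_append_Some[OF Cons.prems(1), of "[V p]"] p by (simp add: step_V del: step.simps)
  then have rc: "run (apply_swaps w0 x) [Cup c'] = Some (swap_at p y)"
    using equiv_at_run[OF w0(2)] rx0 by (simp add: run_append)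
  obtain c'' w1 where w1: "within (length (apply_swaps w0 x)) w1"
    "equiv_at (apply_swaps w0 x) (Cup c' # virtual u) (virtual w1 @ [Cup c''])"
    using Cons.IH[OF rc] Cons.prems p by auto
  have "equiv_at x ([Cup c, V p] @ virtual u) ((virtual w0 @ [Cup c']) @ virtual u)"
    using equiv_at_append_right[OF w0(2)] .
  also have "\<dots> = virtual w0 @ (Cup c' # virtual u)"
    by simp
  also have "equiv_at x \<dots> (virtual w0 @ (virtual w1 @ [Cup c'']))"
    using equiv_at_append_left[OF w1(2) rx0] .
  finally show ?case
    using w0 w1 by (intro exI[of _ c''] exI[of _ "w0 @ w1"]) auto
qed

lemma cap_step_right: "j < length x \<Longrightarrow> equiv_at x [Cap e j] [Cap e (Suc j), V j, V (Suc j)]"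
proof -
  assume "j < length x"
  then obtain A b B where x: "x = A @ b # B" "length A = j"
    using split_nth by blast
  have "equiv_at x [Cap e j] [Cap e j, V (Suc j), V (Suc j)]"
    using equiv_at_cong[OF equiv_at_sym[OF equiv_at_V2[of "Suc j" "A @ e # (\<not> e) # b # B"]], of x "[Cap e j]" "[]"] x
    by (simp add: nth_append)
  also have "equiv_at x \<dots> [Cap e (Suc j), V j, V (Suc j)]"
    using equiv_at_cong[OF equiv_at_pfV_cap[of j x e], of x "[]" "[V (Suc j)]"] x by simp
  finally show ?thesis .
qed

lemma cap_step_left: "j < length x \<Longrightarrow> equiv_at x [Cap e (Suc j)] [Cap e j, V (Suc j), V j]"
proof -
  assume "j < length x"
  then obtain A b B where x: "x = A @ b # B" "length A = j"
    using split_nth by blast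
  have "equiv_at x [Cap e (Suc j)] [Cap e (Suc j), V j, V j]"
    using equiv_at_cong[OF equiv_at_sym[OF equiv_at_V2[of j "A @ b # e # (\<not> e) # B"]], of x "[Cap e (Suc j)]" "[]"] x
    by (simp add: nth_append)
  also have "equiv_at x \<dots> [Cap e j, V (Suc j), V j]"
    using equiv_at_cong[OF equiv_at_sym[OF equiv_at_pfV_cap[of j x e]], of x "[]" "[V j]"] x by simp
  finally show ?thesis .
qed

lemma cap_move_right:
  "j + d \<le> length x \<Longrightarrow> \<exists>\<gamma>. within (length x + 2) \<gamma> \<and> equiv_at x [Cap e j] (Cap e (j + d) # virtual \<gamma>)"
proof (induction d)
  case (Suc d)
  then obtain \<gamma> where g: "within (length x + 2) \<gamma>" "equiv_at x [Cap e j] (Cap e (j + d) # virtual \<gamma>)"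
    by auto
  note g(2)
  also have "equiv_at x (Cap e (j + d) # virtual \<gamma>) ([Cap e (Suc (j + d)), V (j + d), V (Suc (j + d))] @ virtual \<gamma>)"
    using Suc.prems equiv_at_append_right[OF cap_step_right, of "j + d" x e "virtual \<gamma>"] by simp
  finally show ?case
    using g(1) Suc.prems by (intro exI[of _ "[j + d, Suc (j + d)] @ \<gamma>"]) auto
qed (intro exI[of _ "[]"], auto)

lemma cap_move_left:
  "j + d \<le> length x \<Longrightarrow> \<exists>\<gamma>. within (length x + 2) \<gamma> \<and> equiv_at x [Cap e (j + d)] (Cap e j # virtual \<gamma>)"
proof (induction d)
  case (Suc d)
  then obtain \<gamma> where g: "within (length x + 2) \<gamma>" "equiv_at x [Cap e (j + d)] (Cap e j # virtual \<gamma>)"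
    by auto
  have "equiv_at x [Cap e (Suc (j + d))] ([Cap e (j + d)] @ [V (Suc (j + d)), V (j + d)])"
    using Suc.prems by (simp add: cap_step_left)
  also have "equiv_at x \<dots> ((Cap e j # virtual \<gamma>) @ [V (Suc (j + d)), V (j + d)])"
    using g by (intro equiv_at_append_right)
  finally show ?case
    using g(1) Suc.prems by (intro exI[of _ "\<gamma> @ [Suc (j + d), j + d]"]) auto
qed (intro exI[of _ "[]"], auto)

lemma cap_normalize:
  assumes "j \<le> length x" "k \<le> length x"
  shows "\<exists>\<gamma>. within (length x + 2) \<gamma> \<and> equiv_at x [Cap d j] (Cap False k # virtual \<gamma>)"
proof -
  obtain \<gamma> where g: "within (length x + 2) \<gamma>" "equiv_at x [Cap d j] (Cap d k # virtual \<gamma>)"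
    using assms cap_move_right[of j "k - j" x d] cap_move_left[of k "j - k" x d] by (cases "j \<le> k") auto
  show ?thesis
  proof (cases d)
    case True
    note g(2)
    also have "equiv_at x (Cap d k # virtual \<gamma>) ([Cap False k, V k] @ virtual \<gamma>)"
      using equiv_at_append_right[OF cap_flip[of k x False], of "virtual \<gamma>"] assms True by simp
    finally show ?thesis
      using g(1) assms by (intro exI[of _ "k # \<gamma>"]) auto
  qed (use g in auto)
qed

lemma cup_step_right:
  "run x [Cup i] \<noteq> None \<Longrightarrow> Suc (Suc i) < length x \<Longrightarrow> equiv_at x [Cup i] [V (Suc i), V i, Cup (Suc i)]"
proof -
  assume a: "run x [Cup i] \<noteq> None" "Suc (Suc i) < length x"
  then obtain A p q r B where x: "x = A @ p # q # r # B" "length A = i"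
    using split_nth3 by blast
  have pq: "p \<noteq> q"
    using a x by (auto simp: nth_append split: if_splits)
  have "equiv_at x [Cup i] [V (Suc i), V (Suc i), Cup i]"
    using equiv_at_cong[OF equiv_at_sym[OF equiv_at_V2[of "Suc i" x]], of x "[]" "[Cup i]"] x by simp
  also have "equiv_at x \<dots> [V (Suc i), V i, Cup (Suc i)]"
    using equiv_at_cong[OF equiv_at_sym[OF equiv_at_pfV_cup[where i=i and x="A @ p # r # q # B"]],
        of x "[V (Suc i)]" "[]"] x pq
    by (simp add: nth_append)
  finally show ?thesis .
qed

lemma cup_step_left: "run x [Cup (Suc i)] \<noteq> None \<Longrightarrow> equiv_at x [Cup (Suc i)] [V i, V (Suc i), Cup i]"
proof -
  assume a: "run x [Cup (Suc i)] \<noteq> None"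
  then have "Suc (Suc i) < length x"
    by (auto split: if_splits)
  then obtain A p q r B where x: "x = A @ p # q # r # B" "length A = i"
    using split_nth3 by blast
  have qr: "q \<noteq> r"
    using a x by (auto simp: nth_append split: if_splits)
  have "equiv_at x [Cup (Suc i)] [V i, V i, Cup (Suc i)]"
    using equiv_at_cong[OF equiv_at_sym[OF equiv_at_V2[of i x]], of x "[]" "[Cup (Suc i)]"] x by simp
  also have "equiv_at x \<dots> [V i, V (Suc i), Cup i]"
    using equiv_at_cong[OF equiv_at_pfV_cup[where i=i and x="A @ q # p # r # B"], of x "[V i]" "[]"] x qr
    by (simp add: nth_append)
  finally show ?thesis .
qed

lemma cup_move_right:
  "Suc (i + d) < length x \<Longrightarrow> run x [Cup i] \<noteq> None \<Longrightarrow>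
   \<exists>\<gamma>. within (length x) \<gamma> \<and> equiv_at x [Cup i] (virtual \<gamma> @ [Cup (i + d)])"
proof (induction d)
  case (Suc d)
  then obtain \<gamma> where g: "within (length x) \<gamma>" "equiv_at x [Cup i] (virtual \<gamma> @ [Cup (i + d)])"
    by auto
  have rg: "run x (virtual \<gamma>) = Some (apply_swaps \<gamma> x)"
    using g run_virtual by blast
  have "run (apply_swaps \<gamma> x) [Cup (i + d)] \<noteq> None"
    using equiv_at_run[OF g(2)] Suc.prems run_append_Some[OF rg, of "[Cup (i + d)]"] by simp
  then have "equiv_at (apply_swaps \<gamma> x) [Cup (i + d)] [V (Suc (i + d)), V (i + d), Cup (Suc (i + d))]"
    using Suc.prems g by (intro cup_step_right) auto
  from equiv_at_trans[OF g(2) equiv_at_append_left[OF this rg]] show ?case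
    using g(1) Suc.prems by (intro exI[of _ "\<gamma> @ [Suc (i + d), i + d]"]) auto
qed (intro exI[of _ "[]"], auto)

lemma cup_move_left:
  "Suc (i + d) < length x \<Longrightarrow> run x [Cup (i + d)] \<noteq> None \<Longrightarrow>
   \<exists>\<gamma>. within (length x) \<gamma> \<and> equiv_at x [Cup (i + d)] (virtual \<gamma> @ [Cup i])"
proof (induction d arbitrary: x)
  case (Suc d)
  let ?x' = "apply_swaps [i + d, Suc (i + d)] x"
  have 1: "equiv_at x [Cup (Suc (i + d))] (virtual [i + d, Suc (i + d)] @ [Cup (i + d)])"
    using Suc.prems by (simp add: cup_step_left)
  have rg: "run x (virtual [i + d, Suc (i + d)]) = Some ?x'"
    using Suc.prems by (intro run_virtual) auto
  have "run ?x' [Cup (i + d)] \<noteq> None"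
    using equiv_at_run[OF 1] Suc.prems run_append_Some[OF rg, of "[Cup (i + d)]"] by simp
  moreover have "length ?x' = length x"
    using Suc.prems by (intro length_apply_swaps) auto
  ultimately obtain \<gamma> where g: "within (length x) \<gamma>" "equiv_at ?x' [Cup (i + d)] (virtual \<gamma> @ [Cup i])"
    using Suc.IH[of ?x'] Suc.prems by auto
  from equiv_at_trans[OF 1 equiv_at_append_left[OF g(2) rg]] show ?case
    using g(1) Suc.prems by (intro exI[of _ "[i + d, Suc (i + d)] @ \<gamma>"]) auto
qed (intro exI[of _ "[]"], auto)

lemma cup_normalize:
  assumes "run x [Cup i] = Some y" "Suc j < length x"
  shows "\<exists>\<gamma>. within (length x) \<gamma> \<and> apply_swaps \<gamma> x ! j \<and> run (apply_swaps \<gamma> x) [Cup j] = Some y \<and>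
    equiv_at x [Cup i] (virtual \<gamma> @ [Cup j])"
proof -
  have "Suc i < length x"
    using assms by (auto split: if_splits)
  then obtain \<gamma> where g: "within (length x) \<gamma>" "equiv_at x [Cup i] (virtual \<gamma> @ [Cup j])"
    using assms cup_move_right[of i "j - i" x] cup_move_left[of j "i - j" x] by (cases "i \<le> j") auto
  define x' where "x' = apply_swaps \<gamma> x"
  have rg: "run x (virtual \<gamma>) = Some x'"
    using run_virtual g unfolding x'_def by blast
  have r': "run x' [Cup j] = Some y"
    using equiv_at_run[OF g(2)] assms run_append_Some[OF rg, of "[Cup j]"] by simp
  show ?thesis
  proof (cases "x' ! j")
    case True
    then show ?thesis
      using g r' unfolding x'_def by blast
  next
    case False
    have flip: "equiv_at x' [Cup j] [V j, Cup j]"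
      using cup_flip r' by simp
    have lx': "length x' = length x"
      using g unfolding x'_def by simp
    have rs: "run x' [V j] = Some (swap_at j x')"
      using assms lx' by (simp add: step_V del: step.simps)
    have "run (swap_at j x') [Cup j] = Some y"
      using equiv_at_run[OF flip] r' run_append_Some[OF rs, of "[Cup j]"] by simp
    moreover have "swap_at j x' ! j"
      using r' False assms lx' by (auto simp: swap_at_def nth_append split: if_splits)
    moreover have "equiv_at x [Cup i] (virtual (\<gamma> @ [j]) @ [Cup j])"
      using equiv_at_trans[OF g(2) equiv_at_append_left[OF flip rg]] by simp
    ultimately show ?thesis
      using g assms unfolding x'_def by (intro exI[of _ "\<gamma> @ [j]"]) (auto simp: apply_swaps_append)
  qed
qed

lemma rightmost_cap_commute:
  "run u W = Some u' \<Longrightarrow> equiv_at (u @ z) (Cap d (length u) # W) (W @ [Cap d (length u')])"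
proof (induction W arbitrary: u)
  case (Cons g W)
  obtain u1 where u1: "step u g = Some u1" "run u1 W = Some u'"
    using Cons.prems by (auto split: option.splits)
  have pg: "pos g + top_ar g \<le> length u"
    using step_Some_pos u1 by blast
  have "length u + bot_ar g - top_ar g = length u1"
    using step_length[OF u1(1)] pg by linarith
  moreover have "equiv_at (u @ z) [Cap d (length u), g]
      [g, setpos (Cap d (length u)) (pos (Cap d (length u)) + bot_ar g - top_ar g)]"
    using pg step_extend[OF u1(1), of "[d, \<not> d] @ z"] by (intro equiv_at_interchange) (auto simp: nth_append)
  ultimately have "equiv_at (u @ z) ([Cap d (length u), g] @ W) ([g, Cap d (length u1)] @ W)"
    by (intro equiv_at_append_right) simp
  also have "\<dots> = [g] @ (Cap d (length u1) # W)"
    by simp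
  also have "equiv_at (u @ z) \<dots> ([g] @ (W @ [Cap d (length u')]))"
    using step_extend[OF u1(1), of z] by (intro equiv_at_append_left[OF Cons.IH[OF u1(2)]]) simp
  finally show ?case by simp
qed simp

lemma detour_piece_local:
  assumes "step (A @ S @ C) g = Some y" "length A = pos g" "length S = top_ar g"
  shows "equiv_at (A @ s # S @ C)
    (virtual [pos g..<pos g + top_ar g] @ [g] @ virtual (rev [pos g..<pos g + bot_ar g])) [shift_gen 1 g]"
proof (cases g)
  case (Cap d p)
  then have S: "S = []" "p = length A"
    using assms(2,3) by auto
  have "equiv_at (A @ s # C) [Cap d p, V (Suc p), V p] [Cap d (Suc p), V p, V p]"
    using equiv_at_cong[OF equiv_at_pfV_cap[of p "A @ s # C" d], of "A @ s # C" "[]" "[V p]"] S by simp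
  also have "equiv_at (A @ s # C) \<dots> [Cap d (Suc p)]"
    using equiv_at_cong[OF equiv_at_V2[of p "A @ s # d # (\<not> d) # C"], of "A @ s # C" "[Cap d (Suc p)]" "[]"] S
    by (simp add: nth_append)
  finally show ?thesis
    using Cap S by (simp add: numeral_2_eq_2)
next
  case (Cup p)
  then obtain a b where S: "S = [a, b]" "p = length A"
    using assms(2,3) length_eq_2_iff[THEN iffD1] by fastforce
  have ab: "a \<noteq> b"
    using assms(1) Cup S by (auto simp: nth_append split: if_splits)
  have "equiv_at (A @ s # a # b # C) [V p, V (Suc p), Cup p] [V p, V p, Cup (Suc p)]"
    using equiv_at_cong[OF equiv_at_sym[OF equiv_at_pfV_cup[where i=p and x="A @ a # s # b # C"]],
        of "A @ s # a # b # C" "[V p]" "[]"] S ab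
    by (simp add: nth_append)
  also have "equiv_at (A @ s # a # b # C) \<dots> [Cup (Suc p)]"
    using equiv_at_cong[OF equiv_at_V2[of p "A @ s # a # b # C"], of "A @ s # a # b # C" "[]" "[Cup (Suc p)]"] S
    by simp
  finally show ?thesis
    using Cup S by (simp add: numeral_2_eq_2)
next
  case (X t p)
  then obtain a b where S: "S = [a, b]" "p = length A"
    using assms(2,3) length_eq_2_iff[THEN iffD1] by fastforce
  have "equiv_at (A @ s # a # b # C) [V p, V (Suc p), X t p, V (Suc p), V p]
      [X t (Suc p), V p, V (Suc p), V (Suc p), V p]"
    using equiv_at_cong[OF equiv_at_V4a[of p "A @ s # a # b # C" t], of "A @ s # a # b # C" "[]" "[V (Suc p), V p]"] S
    by simp
  also have "equiv_at (A @ s # a # b # C) \<dots> [X t (Suc p), V p, V p]"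
    using equiv_at_cong[OF equiv_at_V2[of "Suc p" "A @ b # s # a # C"],
        of "A @ s # a # b # C" "[X t (Suc p), V p]" "[V p]"] S
    by (simp add: nth_append)
  also have "equiv_at (A @ s # a # b # C) \<dots> [X t (Suc p)]"
    using equiv_at_cong[OF equiv_at_V2[of p "A @ s # b # a # C"], of "A @ s # a # b # C" "[X t (Suc p)]" "[]"] S
    by (simp add: nth_append)
  finally show ?thesis
    using X S by (simp add: numeral_2_eq_2)
next
  case (V p)
  then obtain a b where S: "S = [a, b]" "p = length A"
    using assms(2,3) length_eq_2_iff[THEN iffD1] by fastforce
  have "equiv_at (A @ s # a # b # C) [V p, V (Suc p), V p, V (Suc p), V p]
      [V (Suc p), V p, V (Suc p), V (Suc p), V p]"
    using equiv_at_cong[OF equiv_at_V3[of p "A @ s # a # b # C"], of "A @ s # a # b # C" "[]" "[V (Suc p), V p]"] S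
    by simp
  also have "equiv_at (A @ s # a # b # C) \<dots> [V (Suc p), V p, V p]"
    using equiv_at_cong[OF equiv_at_V2[of "Suc p" "A @ b # s # a # C"],
        of "A @ s # a # b # C" "[V (Suc p), V p]" "[V p]"] S
    by (simp add: nth_append)
  also have "equiv_at (A @ s # a # b # C) \<dots> [V (Suc p)]"
    using equiv_at_cong[OF equiv_at_V2[of p "A @ s # b # a # C"], of "A @ s # a # b # C" "[V (Suc p)]" "[]"] S
    by (simp add: nth_append)
  finally show ?thesis
    using V S by (simp add: numeral_2_eq_2)
next
  case (Bar p)
  then obtain a where S: "S = [a]" "p = length A"
    using assms(2,3) by (cases S) auto
  have "equiv_at (A @ s # a # C) [V p, Bar p, V p] [Bar (Suc p), V p, V p]"
    using equiv_at_cong[OF equiv_at_sym[OF equiv_at_T1b[of p "A @ s # a # C"]], of "A @ s # a # C" "[]" "[V p]"] S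
    by simp
  also have "equiv_at (A @ s # a # C) \<dots> [Bar (Suc p)]"
    using equiv_at_cong[OF equiv_at_V2[of p "A @ s # a # C"], of "A @ s # a # C" "[Bar (Suc p)]" "[]"] S by simp
  finally show ?thesis
    using Bar S by simp
qed

lemma upt_split: "a \<le> b \<Longrightarrow> b \<le> c \<Longrightarrow> [a..<c] = [a..<b] @ [b..<c]"
  by (metis le_add_diff_inverse upt_add_eq_append)

lemma map_add_diff_upt: "t \<le> m \<Longrightarrow> map (\<lambda>q. q + c - t) [m..<n] = [m + c - t..<n + c - t]"
  by (induction n) (auto simp: Suc_diff_le)

text \<open>The new leftmost strand \<open>s\<close> is moved to the far right by \<open>virtual [0..<length u]\<close>, so that
  it passes to the right of \<open>g\<close>, and then back; locally it is pulled across \<open>g\<close>.\<close>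

lemma detour_piece:
  assumes st: "step u g = Some u'"
  shows "equiv_at (s # u) [shift_gen 1 g] (virtual [0..<length u] @ [g] @ virtual (rev [0..<length u']))"
proof -
  define p t b where "p = pos g" and "t = top_ar g" and "b = bot_ar g"
  have pg: "p + t \<le> length u"
    using step_Some_pos st unfolding p_def t_def by blast
  define A S C where "A = take p u" and "S = take t (drop p u)" and "C = drop (p + t) u"
  have u: "u = A @ S @ C"
    unfolding A_def S_def C_def using pg by (metis append_take_drop_id add.commute drop_drop)
  have lA: "length A = p" "length S = t"
    using pg unfolding A_def S_def by auto
  have "step (A @ S @ C) g = (if local_ok g S then Some (A @ local_out g S @ C) else None)"
    using step_local[of A g S C] lA unfolding p_def t_def by simp
  then have ok: "local_ok g S" and u': "u' = A @ local_out g S @ C"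
    using st u by (auto split: if_splits)
  have lo: "length (local_out g S) = b"
    using length_local_out lA unfolding t_def b_def by blast
  have lu: "length u = p + t + length C" "length u' = p + b + length C"
    using u u' lA lo by auto
  have L1: "[0..<length u] = [0..<p] @ [p..<p+t] @ [p+t..<length u]"
    using lu upt_split[of 0 p "length u"] upt_split[of p "p+t" "length u"] by simp
  have "[0..<length u'] = [0..<p] @ [p..<p+b] @ [p+b..<length u']"
    using lu upt_split[of 0 p "length u'"] upt_split[of p "p+b" "length u'"] by simp
  then have L2: "rev [0..<length u'] = rev [p+b..<length u'] @ rev [p..<p+b] @ rev [0..<p]"
    by simp
  have r1: "run (s # u) (virtual [0..<p]) = Some (A @ s # S @ C)"
    using run_virtual[of "s # u" "[0..<p]"] apply_swaps_upt_mid[of "[]" A s "S @ C"] u lA pg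
    by (simp add: within_upt)
  have r12: "run (s # u) (virtual [0..<p] @ virtual [p..<p+t]) = Some (A @ S @ s # C)"
    using run_append_Some[OF r1] run_virtual[of "A @ s # S @ C" "[p..<p+t]"] apply_swaps_upt_mid[of A S s C]
      lA pg by (simp add: within_upt)
  have r123: "run (s # u) (virtual [0..<p] @ virtual [p..<p+t] @ [g]) = Some (A @ local_out g S @ s # C)"
    using run_append_Some[OF r12, of "[g]"] step_local[of A g S "s # C"] lA ok unfolding p_def t_def by simp
  have rg: "run (s # u) [shift_gen 1 g] = Some (s # u')"
    using step_shift_gen[of "[s]" 1 u g] st by simp
  have pass_right: "equiv_at (A @ S @ s # C) (virtual [p+t..<length u] @ [g]) (g # virtual [p+b..<length u'])"
  proof -
    have "run (A @ S @ s # C) (virtual [p+t..<length u]) = Some (A @ S @ C @ [s])"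
      using run_virtual[of "A @ S @ s # C" "[p+t..<length u]"] apply_swaps_upt_Cons[of "A @ S" C s] lA lu
      by (simp add: within_upt)
    then have "equiv_at (A @ S @ s # C) (virtual [p+t..<length u] @ [g])
        (g # virtual (map (\<lambda>q. q + bot_ar g - top_ar g) [p+t..<length u]))"
      using step_extend[OF st, of "[s]"] u
      by (intro virtual_commute_right) (auto simp: run_append p_def t_def)
    moreover have "map (\<lambda>q. q + bot_ar g - top_ar g) [p+t..<length u] = [p+b..<length u']"
      using map_add_diff_upt[of t "p + t" "bot_ar g" "length u"] lu unfolding t_def b_def by (simp add: ac_simps)
    ultimately show ?thesis by simp
  qed
  have cancel_right: "equiv_at (A @ local_out g S @ s # C) (virtual ([p+b..<length u'] @ rev [p+b..<length u'])) []"
    using lu lA lo u' by (intro virtual_cancel) (auto simp: within_upt)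
  have middle: "equiv_at (A @ s # S @ C) (virtual [p..<p+t] @ [g] @ virtual (rev [p..<p+b])) [shift_gen 1 g]"
    using detour_piece_local[of A S C g u' s] st u lA unfolding p_def t_def b_def by simp
  have pass_left: "equiv_at (s # u) (virtual [0..<p] @ [shift_gen 1 g]) (shift_gen 1 g # virtual [0..<p])"
    using r1 step_local[of "A @ [s]" "shift_gen 1 g" S C] lA ok unfolding p_def t_def
    by (intro virtual_commute_left) (auto simp: run_append shift_gen_def)
  have cancel_left: "equiv_at (s # u') (virtual ([0..<p] @ rev [0..<p])) []"
    using lu by (intro virtual_cancel) (auto simp: within_upt)
  have "virtual [0..<length u] @ [g] @ virtual (rev [0..<length u'])
      = (virtual [0..<p] @ virtual [p..<p+t]) @ (virtual [p+t..<length u] @ [g]) @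
        virtual (rev [p+b..<length u']) @ virtual (rev [p..<p+b]) @ virtual (rev [0..<p])"
    unfolding L1 L2 by simp
  also have "equiv_at (s # u) \<dots> ((virtual [0..<p] @ virtual [p..<p+t]) @ (g # virtual [p+b..<length u']) @
        virtual (rev [p+b..<length u']) @ virtual (rev [p..<p+b]) @ virtual (rev [0..<p]))"
    using equiv_at_cong[OF pass_right r12] .
  also have "\<dots> = (virtual [0..<p] @ virtual [p..<p+t] @ [g]) @
      virtual ([p+b..<length u'] @ rev [p+b..<length u']) @ virtual (rev [p..<p+b]) @ virtual (rev [0..<p])"
    by simp
  also have "equiv_at (s # u) \<dots> ((virtual [0..<p] @ virtual [p..<p+t] @ [g]) @ [] @
      virtual (rev [p..<p+b]) @ virtual (rev [0..<p]))"
    using equiv_at_cong[OF cancel_right r123] .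
  also have "\<dots> = virtual [0..<p] @ (virtual [p..<p+t] @ [g] @ virtual (rev [p..<p+b])) @ virtual (rev [0..<p])"
    by simp
  also have "equiv_at (s # u) \<dots> (virtual [0..<p] @ [shift_gen 1 g] @ virtual (rev [0..<p]))"
    using equiv_at_cong[OF middle r1] .
  also have "\<dots> = (virtual [0..<p] @ [shift_gen 1 g]) @ virtual (rev [0..<p])"
    by simp
  also have "equiv_at (s # u) \<dots> ((shift_gen 1 g # virtual [0..<p]) @ virtual (rev [0..<p]))"
    using equiv_at_append_right[OF pass_left] .
  also have "\<dots> = [shift_gen 1 g] @ virtual ([0..<p] @ rev [0..<p]) @ []"
    by simp
  also have "equiv_at (s # u) \<dots> ([shift_gen 1 g] @ [] @ [])"
    using equiv_at_cong[OF cancel_left rg] .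
  finally have "equiv_at (s # u) (virtual [0..<length u] @ [g] @ virtual (rev [0..<length u'])) [shift_gen 1 g]"
    by simp
  then show ?thesis
    by (rule equiv_at_sym)
qed

lemma run_virtual_upt_Cons: "run (s # u) (virtual [0..<length u]) = Some (u @ [s])"
  using run_virtual[of "s # u" "[0..<length u]"] apply_swaps_upt_mid[of "[]" u s "[]"] by (simp add: within_upt)

lemma detour:
  "run u W = Some u' \<Longrightarrow>
   equiv_at (s # u) (map (shift_gen 1) W) (virtual [0..<length u] @ W @ virtual (rev [0..<length u']))"
proof (induction W arbitrary: u)
  case Nil
  then show ?case
    using equiv_at_sym[OF virtual_cancel[of "s # u" "[0..<length u]"]] by (simp add: within_upt)
next
  case (Cons g W)
  obtain u1 where u1: "step u g = Some u1" "run u1 W = Some u'"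
    using Cons.prems by (auto split: option.splits)
  let ?D = "virtual [0..<length u] @ [g] @ virtual (rev [0..<length u1])"
  have D: "equiv_at (s # u) [shift_gen 1 g] ?D"
    using detour_piece[OF u1(1)] .
  have rD: "run (s # u) ?D = Some (s # u1)"
    using equiv_at_run[OF D] step_shift_gen[of "[s]" 1 u g] u1 by simp
  have rg: "run (s # u) (virtual [0..<length u] @ [g]) = Some (u1 @ [s])"
    using run_append_Some[OF run_virtual_upt_Cons[of s u], of "[g]"] step_extend[OF u1(1), of "[s]"] by simp
  have "equiv_at (s # u) ([shift_gen 1 g] @ map (shift_gen 1) W) (?D @ map (shift_gen 1) W)"
    using equiv_at_append_right[OF D] .
  also have "equiv_at (s # u) \<dots> (?D @ (virtual [0..<length u1] @ W @ virtual (rev [0..<length u'])))"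
    using equiv_at_append_left[OF Cons.IH[OF u1(2)] rD] .
  also have "\<dots> = (virtual [0..<length u] @ [g]) @ virtual (rev [0..<length u1] @ [0..<length u1]) @
      (W @ virtual (rev [0..<length u']))"
    by simp
  also have "equiv_at (s # u) \<dots> ((virtual [0..<length u] @ [g]) @ [] @ (W @ virtual (rev [0..<length u'])))"
    using equiv_at_cong[OF virtual_cancel' rg] by (simp add: within_upt)
  finally show ?case by simp
qed

subsection \<open>Sorting a row of orientations\<close>

definition n_down :: "bool list \<Rightarrow> nat" where
  "n_down w = length (filter id w)"

definition n_up :: "bool list \<Rightarrow> nat" where
  "n_up w = length (filter Not w)"

lemma n_down_simps [simp]:
  "n_down [] = 0" "n_down (True # w) = Suc (n_down w)" "n_down (False # w) = n_down w"
  "n_down (u @ v) = n_down u + n_down v"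
  by (auto simp: n_down_def)

lemma n_up_simps [simp]: "n_up [] = 0" "n_up (True # w) = n_up w" "n_up (False # w) = Suc (n_up w)"
  by (auto simp: n_up_def)

lemma n_down_add_n_up: "n_down x + n_up x = length x"
  unfolding n_down_def n_up_def by (induction x) auto

lemma n_down_swap_at: "Suc i < length x \<Longrightarrow> n_down (swap_at i x) = n_down x"
  by (auto dest!: split_nth2 simp: swap_at_append_Cons n_down_def)

lemma n_down_apply_swaps: "within (length x) u \<Longrightarrow> n_down (apply_swaps u x) = n_down x"
  by (induction u arbitrary: x) (auto simp: n_down_swap_at)

lemma n_down_nested_row: "n_down (nested_row k) = k"
  by (simp add: nested_row_def n_down_def)

definition sorted_row :: "bool list \<Rightarrow> bool list" where
  "sorted_row w = replicate (n_down w) True @ replicate (n_up w) False"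

lemma length_sorted_row [simp]: "length (sorted_row w) = length w"
  using n_down_add_n_up[of w] by (simp add: sorted_row_def)

lemma sorted_row_simps:
  "sorted_row (True # w) = True # sorted_row w"
  "sorted_row (False # w) = replicate (n_down w) True @ False # replicate (n_up w) False"
  by (auto simp: sorted_row_def replicate_app_Cons_same)

lemma sorted_row_eq_nested_row: "n_down w = k \<Longrightarrow> length w = 2*k \<Longrightarrow> sorted_row w = nested_row k"
  using n_down_add_n_up[of w] by (simp add: sorted_row_def nested_row_def)

fun unsort :: "bool list \<Rightarrow> nat list" where
  "unsort [] = []"
| "unsort (True # w) = map Suc (unsort w)"
| "unsort (False # w) = rev [0..<n_down w] @ map Suc (unsort w)"

lemma unsort_correct: "within (length w) (unsort w) \<and> apply_swaps (unsort w) (sorted_row w) = w"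
proof (induction w)
  case Nil
  then show ?case by (simp add: sorted_row_def)
next
  case (Cons c w)
  have "apply_swaps (map ((+) 1) (unsort w)) ([c] @ sorted_row w) = [c] @ apply_swaps (unsort w) (sorted_row w)"
    using Cons by (intro apply_swaps_shift) auto
  moreover have "(+) (Suc 0) = Suc"
    by (rule ext) simp
  ultimately have shift: "apply_swaps (map Suc (unsort w)) (c # sorted_row w) = c # w"
    using Cons by simp
  show ?case
  proof (cases c)
    case True
    then show ?thesis
      using Cons shift by (auto simp: sorted_row_simps within_def)
  next
    case False
    have "apply_swaps (rev [0..<n_down w]) (replicate (n_down w) True @ False # replicate (n_up w) False)
        = False # sorted_row w"
      using apply_swaps_rev_upt_Cons[of "replicate (n_down w) True" False "replicate (n_up w) False"]
      by (simp add: sorted_row_def)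
    moreover have "n_down w \<le> length w"
      unfolding n_down_def by simp
    ultimately show ?thesis
      using Cons False shift by (auto simp: sorted_row_simps within_def apply_swaps_append)
  qed
qed

lemma X_through_rev_upt:
  assumes "Suc (Suc j) \<le> a" "a < length x"
  shows "equiv_at x (virtual (rev [0..<a]) @ [X t (Suc j)]) (X t j # virtual (rev [0..<a]))"
proof -
  let ?R = "rev [Suc (Suc j)..<a]"
  have ra: "rev [0..<a] = ?R @ [Suc j, j] @ rev [0..<j]"
    using assms upt_split[of 0 j a] upt_split[of j "Suc (Suc j)" a] by (simp add: upt_conv_Cons)
  define x2 where "x2 = apply_swaps ?R x"
  define x3 where "x3 = apply_swaps [Suc j, j] x2"
  have r2: "run x (virtual ?R) = Some x2" and l2: "length x2 = length x"
    unfolding x2_def using assms by (auto intro!: run_virtual simp: within_def)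
  have "run x2 (virtual [Suc j, j]) = Some x3"
    unfolding x3_def using assms l2 by (intro run_virtual) auto
  then have r3: "run x (virtual ?R @ virtual [Suc j, j]) = Some x3"
    by (simp only: run_append_Some[OF r2])
  have l3: "length x3 = length x"
    unfolding x3_def using assms l2 by (intro trans[OF length_apply_swaps]) auto
  have "equiv_at x (virtual (rev [0..<a]) @ [X t (Suc j)])
      ((virtual ?R @ virtual [Suc j, j]) @ virtual (rev [0..<j]) @ [X t (Suc j)])"
    using ra by simp
  also have "equiv_at x \<dots> ((virtual ?R @ virtual [Suc j, j]) @ X t (Suc j) # virtual (rev [0..<j]))"
  proof (intro equiv_at_append_left[OF _ r3] virtual_commute_left)
    show "run x3 (virtual (rev [0..<j]) @ [X t (Suc j)]) \<noteq> None"
      using assms l3 run_append_Some[OF run_virtual[of x3 "rev [0..<j]"]]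
      by (auto simp: within_def)
  qed auto
  also have "\<dots> = virtual ?R @ [V (Suc j), V j, X t (Suc j)] @ virtual (rev [0..<j])"
    by simp
  also have "equiv_at x \<dots> (virtual ?R @ [X t j, V (Suc j), V j] @ virtual (rev [0..<j]))"
    using assms l2 by (intro equiv_at_cong[OF _ r2] equiv_at_V4b) auto
  also have "\<dots> = (virtual ?R @ [X t j]) @ ([V (Suc j), V j] @ virtual (rev [0..<j]))"
    by simp
  also have "equiv_at x \<dots> ((X t j # virtual ?R) @ ([V (Suc j), V j] @ virtual (rev [0..<j])))"
  proof (intro equiv_at_append_right)
    have "equiv_at x (virtual ?R @ [X t j]) (X t j # virtual (map (\<lambda>q. q + bot_ar (X t j) - top_ar (X t j)) ?R))"
      using r2 l2 assms by (intro virtual_commute_right) (auto simp: run_append)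
    then show "equiv_at x (virtual ?R @ [X t j]) (X t j # virtual ?R)"
      by simp
  qed
  finally show ?thesis
    using ra by simp
qed

lemma n_down_take_less:
  "Suc i < length w \<Longrightarrow> w ! i \<Longrightarrow> w ! Suc i \<Longrightarrow> Suc (Suc (n_down (take i w))) \<le> n_down w"
  by (auto dest!: split_nth2 simp: nth_append)

lemma map_shift_gen_virtual: "map (shift_gen n) (virtual u) = virtual (map (\<lambda>i. i + n) u)"
  by (simp add: virtual_def)

lemma X_through_unsort:
  "Suc i < length w \<Longrightarrow> w ! i \<Longrightarrow> w ! Suc i \<Longrightarrow>
   equiv_at (sorted_row w) (virtual (unsort w) @ [X t i]) (X t (n_down (take i w)) # virtual (unsort w))"
proof (induction w arbitrary: i)
  case (Cons c w)
  show ?case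
  proof (cases "c \<and> i = 0")
    case True
    then obtain w' where w': "w = True # w'"
      using Cons.prems by (cases w) auto
    have "run (sorted_row (c # w)) (virtual (unsort (c # w))) = Some (c # w)"
      using unsort_correct[of "c # w"] run_virtual by simp
    then have "equiv_at (sorted_row (c # w)) (virtual (unsort (c # w)) @ [X t 0])
        (X t 0 # virtual (map (\<lambda>q. q + bot_ar (X t 0) - top_ar (X t 0)) (unsort (c # w))))"
      using True w' by (intro virtual_commute_right) (auto simp: run_append)
    then show ?thesis
      using True by simp
  next
    case False
    then obtain i' where i: "i = Suc i'"
      using Cons.prems by (cases i) auto
    have IH: "equiv_at (c # sorted_row w) (virtual (map Suc (unsort w)) @ [X t (Suc i')])
        (X t (Suc (n_down (take i' w))) # virtual (map Suc (unsort w)))"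
      using equiv_at_shift[OF Cons.IH, of i' "[c]" 1] Cons.prems i by (simp add: map_shift_gen_virtual)
    show ?thesis
    proof (cases c)
      case True
      then show ?thesis
        using IH i by (simp add: sorted_row_simps)
    next
      case c: False
      have r0: "run (sorted_row (False # w)) (virtual (rev [0..<n_down w])) = Some (False # sorted_row w)"
        using run_virtual[of "sorted_row (False # w)" "rev [0..<n_down w]"]
          apply_swaps_rev_upt_Cons[of "replicate (n_down w) True" False "replicate (n_up w) False"]
        by (simp add: sorted_row_simps within_def sorted_row_def)
      have b: "Suc (Suc (n_down (take i' w))) \<le> n_down w"
        using Cons.prems i by (intro n_down_take_less) auto
      have "equiv_at (sorted_row (False # w)) (virtual (rev [0..<n_down w]) @ (virtual (map Suc (unsort w)) @ [X t i]))
         (virtual (rev [0..<n_down w]) @ (X t (Suc (n_down (take i' w))) # virtual (map Suc (unsort w))))"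
        using equiv_at_append_left[OF IH[simplified c] r0] i by simp
      also have "\<dots> = (virtual (rev [0..<n_down w]) @ [X t (Suc (n_down (take i' w)))]) @ virtual (map Suc (unsort w))"
        by simp
      also have "equiv_at (sorted_row (False # w)) \<dots>
          ((X t (n_down (take i' w)) # virtual (rev [0..<n_down w])) @ virtual (map Suc (unsort w)))"
        using b n_down_add_n_up[of w]
        by (intro equiv_at_append_right X_through_rev_upt) (auto simp: sorted_row_simps)
      finally show ?thesis
        using c i by simp
    qed
  qed
qed simp

section \<open>Partial closures of a braid\<close>

definition caps :: "nat \<Rightarrow> nat \<Rightarrow> gen list" where
  "caps a b = map (Cap True) [a..<b]"

definition cups :: "nat \<Rightarrow> nat \<Rightarrow> gen list" where
  "cups a b = map Cup (rev [a..<b])"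

text \<open>The closure of \<open>\<beta>\<close> in which only the strands \<open>k..<n\<close> are closed up; the first \<open>k\<close> strands
  end at the \<open>2 * k\<close> open points of the row \<^term>\<open>nested_row k\<close>.\<close>

definition partial_closure :: "nat \<Rightarrow> nat \<Rightarrow> bgen list \<Rightarrow> gen list" where
  "partial_closure n k \<beta> = caps 0 n @ map bgen_to_gen \<beta> @ cups k n"

lemma partial_closure_0: "partial_closure n 0 \<beta> = braid_closure n \<beta>"
  by (simp add: partial_closure_def braid_closure_def caps_def cups_def)

lemma partial_closure_Cup: "Suc m \<le> n \<Longrightarrow> partial_closure n (Suc m) \<beta> @ [Cup m] = partial_closure n m \<beta>"
  by (simp add: partial_closure_def cups_def upt_conv_Cons)

lemma nested_row_Suc: "nested_row (Suc m) = replicate m True @ True # False # replicate m False"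
  by (simp add: nested_row_def replicate_append_same[symmetric])

lemma nth_nested_row: "i < m \<Longrightarrow> nested_row m ! i" "m \<le> i \<Longrightarrow> i < 2 * m \<Longrightarrow> \<not> nested_row m ! i"
  by (auto simp: nested_row_def nth_append)

lemma run_Cap_nested_row: "run (nested_row m) [Cap True m] = Some (nested_row (Suc m))"
  by (simp add: nested_row_def nested_row_Suc replicate_append_same[symmetric])

lemma run_Cup_nested_row: "run (nested_row (Suc m)) [Cup m] = Some (nested_row m)"
proof -
  have "step (replicate m True @ [True, False] @ replicate m False) (Cup m) = Some (replicate m True @ [] @ replicate m False)"
    using step_local[of "replicate m True" "Cup m" "[True, False]" "replicate m False"] by simp
  then show ?thesis
    unfolding nested_row_Suc by (simp add: nested_row_def del: step.simps)
qed

lemma run_caps: "c \<le> m \<Longrightarrow> run (nested_row c) (caps c m) = Some (nested_row m)"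
proof (induction m)
  case (Suc m)
  show ?case
  proof (cases "c = Suc m")
    case False
    then have "caps c (Suc m) = caps c m @ [Cap True m]" "c \<le> m"
      using Suc by (auto simp: caps_def)
    then show ?thesis
      using Suc run_append_Some[of "nested_row c" "caps c m" "nested_row m" "[Cap True m]"] run_Cap_nested_row
      by simp
  qed (simp add: caps_def)
qed (simp add: caps_def)

lemma run_cups: "k \<le> m \<Longrightarrow> run (nested_row m) (cups k m) = Some (nested_row k)"
proof (induction m)
  case (Suc m)
  show ?case
  proof (cases "k = Suc m")
    case False
    then have "cups k (Suc m) = [Cup m] @ cups k m" "k \<le> m"
      using Suc by (auto simp: cups_def)
    then show ?thesis
      using Suc run_append_Some[OF run_Cup_nested_row[of m], of "cups k m"] by simp
  qed (simp add: cups_def)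
qed (simp add: cups_def)

lemma step_braid_gen: "bgen_ok n g \<Longrightarrow> step (nested_row n) (bgen_to_gen g) = Some (nested_row n)"
proof -
  assume "bgen_ok n g"
  moreover have "swap_at p (nested_row n) = nested_row n" if "Suc p < n" for p
    using that by (intro swap_at_same) (auto simp: nth_nested_row)
  ultimately show ?thesis
    by (cases g) (auto simp: swap_at_def)
qed

lemma run_braid: "twisted_braid n \<beta> \<Longrightarrow> run (nested_row n) (map bgen_to_gen \<beta>) = Some (nested_row n)"
  by (induction \<beta>) (auto simp: twisted_braid_def step_braid_gen simp del: step.simps)

lemma run_caps_braid: "twisted_braid n \<beta> \<Longrightarrow> run [] (caps 0 n @ map bgen_to_gen \<beta>) = Some (nested_row n)"
  using run_caps[of 0 n] run_braid by (simp add: nested_row_def run_append_Some)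

lemma run_partial_closure:
  "k \<le> n \<Longrightarrow> twisted_braid n \<beta> \<Longrightarrow> run [] (partial_closure n k \<beta>) = Some (nested_row k)"
  unfolding partial_closure_def using run_caps_braid run_cups
  by (simp add: run_append_Some[of "[]" "caps 0 n @ map bgen_to_gen \<beta>", simplified])

lemma absorb_braid_gen:
  assumes "twisted_braid n \<beta>" "k \<le> n" "bgen_ok k g"
  shows "equiv_at [] (partial_closure n k \<beta> @ [bgen_to_gen g]) (partial_closure n k (\<beta> @ [g]))"
proof -
  have "run (nested_row k) [bgen_to_gen g] = Some (nested_row k)"
    using step_braid_gen[OF assms(3)] by simp
  then have "run (nested_row n) (cups k n @ [bgen_to_gen g]) \<noteq> None"
    using run_append_Some[OF run_cups[OF assms(2)]] by simp
  moreover have "pos (bgen_to_gen g) + top_ar (bgen_to_gen g) \<le> k" "top_ar (bgen_to_gen g) = bot_ar (bgen_to_gen g)"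
    using assms(3) by (cases g; auto)+
  ultimately have "equiv_at (nested_row n) (cups k n @ [bgen_to_gen g]) (bgen_to_gen g # cups k n)"
    using equiv_at_commute_right_of[of "cups k n" "bgen_to_gen g" "nested_row n"] by (auto simp: cups_def)
  from equiv_at_append_left[OF this run_caps_braid[OF assms(1)]] show ?thesis
    unfolding partial_closure_def by simp
qed

lemma V_through_cups:
  "k \<le> m \<Longrightarrow> k \<le> q \<Longrightarrow> Suc q < 2*k \<Longrightarrow>
   equiv_at (nested_row m) (cups k m @ [V q]) (V (q + 2*(m-k)) # cups k m)"
proof (induction m)
  case (Suc m)
  show ?case
  proof (cases "k = Suc m")
    case False
    then have km: "k \<le> m"
      using Suc by simp
    have "equiv_at (nested_row (Suc m)) ([Cup m] @ cups k m @ [V q]) ([Cup m] @ V (q + 2*(m-k)) # cups k m)"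
      using Suc km by (intro equiv_at_append_left[OF _ run_Cup_nested_row]) auto
    also have "\<dots> = [Cup m, V (q + 2*(m-k))] @ cups k m"
      by simp
    also have "equiv_at (nested_row (Suc m)) \<dots> ([V (q + 2*(Suc m-k)), Cup m] @ cups k m)"
    proof (intro equiv_at_append_right)
      have "run (nested_row (Suc m)) [Cup m, V (q + 2*(m-k))] \<noteq> None"
        using run_append_Some[OF run_Cup_nested_row[of m], of "[V (q + 2*(m-k))]"] Suc km
        by (simp add: step_V del: step.simps)
      then have "equiv_at (nested_row (Suc m)) [Cup m, setpos (V (q + 2*(m-k) + 2))
          (pos (V (q + 2*(m-k) + 2)) + bot_ar (Cup m) - top_ar (Cup m))] [V (q + 2*(m-k) + 2), Cup m]"
        using Suc km by (intro equiv_at_interchange') auto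
      then show "equiv_at (nested_row (Suc m)) [Cup m, V (q + 2*(m-k))] [V (q + 2*(Suc m-k)), Cup m]"
        using km by (simp add: Suc_diff_le)
    qed
    finally show ?thesis
      using km by (simp add: cups_def)
  qed (simp add: cups_def)
qed (simp add: cups_def)

lemma V_through_caps_right:
  "c + 2 \<le> m \<Longrightarrow> equiv_at (nested_row (c+2)) (caps (c+2) m @ [V (2*m - 2 - c)]) (V (c+2) # caps (c+2) m)"
proof (induction m)
  case (Suc m)
  show ?case
  proof (cases "c + 2 = Suc m")
    case True
    then have "2 * Suc m - 2 - c = c + 2"
      by arith
    then show ?thesis
      using True by (simp add: caps_def)
  next
    case False
    then have cm: "c + 2 \<le> m"
      using Suc by simp
    have "run (nested_row m) [Cap True m, V (2*m - c)] \<noteq> None"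
      using run_append_Some[OF run_Cap_nested_row[of m], of "[V (2*m - c)]"] cm by (simp add: step_V del: step.simps)
    then have "equiv_at (nested_row m) [Cap True m, setpos (V (2*m - c - 2))
        (pos (V (2*m - c - 2)) + bot_ar (Cap True m) - top_ar (Cap True m))] [V (2*m - c - 2), Cap True m]"
      using cm by (intro equiv_at_interchange') (auto simp: numeral_2_eq_2)
    moreover have "2*m - c - 2 + 2 = 2 * Suc m - 2 - c"
      using cm by simp
    ultimately have "equiv_at (nested_row m) [Cap True m, V (2 * Suc m - 2 - c)] [V (2*m - 2 - c), Cap True m]"
      by simp
    then have "equiv_at (nested_row (c+2)) (caps (c+2) m @ [Cap True m, V (2 * Suc m - 2 - c)])
        (caps (c+2) m @ [V (2*m - 2 - c), Cap True m])"
      using run_caps cm by (intro equiv_at_append_left) blast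
    also have "\<dots> = (caps (c+2) m @ [V (2*m - 2 - c)]) @ [Cap True m]"
      by simp
    also have "equiv_at (nested_row (c+2)) \<dots> ((V (c+2) # caps (c+2) m) @ [Cap True m])"
      using equiv_at_append_right[OF Suc.IH[OF cm]] .
    finally show ?thesis
      using cm by (simp add: caps_def)
  qed
qed simp

lemma V_through_cap_pair:
  "equiv_at (nested_row c) [Cap True c, Cap True (Suc c), V (Suc (Suc c))] [Cap True c, Cap True (Suc c), V c]"
proof -
  have r: "run (nested_row c) [Cap True c] = Some (nested_row (Suc c))"
    by (rule run_Cap_nested_row)
  have "equiv_at (nested_row c) [Cap True c, Cap True (Suc c), V (Suc (Suc c))]
      [Cap True c, Cap True (Suc (Suc c)), V (Suc c)]"
    using equiv_at_append_left[OF equiv_at_pfV_cap[of "Suc c" "nested_row (Suc c)" True] r] by simp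
  also have "equiv_at (nested_row c) \<dots> [Cap True c, Cap True c, V (Suc c)]"
  proof -
    have "equiv_at (nested_row c) [Cap True c, Cap True c]
        [Cap True c, setpos (Cap True c) (pos (Cap True c) + bot_ar (Cap True c) - top_ar (Cap True c))]"
      by (intro equiv_at_interchange) (auto simp: nested_row_def)
    then have "equiv_at (nested_row c) [Cap True c, Cap True c] [Cap True c, Cap True (Suc (Suc c))]"
      by (simp add: numeral_2_eq_2)
    from equiv_at_append_right[OF equiv_at_sym[OF this], of "[V (Suc c)]"] show ?thesis
      by simp
  qed
  also have "equiv_at (nested_row c) \<dots> [Cap True c, Cap True (Suc c), V c]"
    using equiv_at_append_left[OF equiv_at_pfV_cap[of c "nested_row (Suc c)" True] r] by simp
  finally show ?thesis .
qed

lemma V_through_caps: "Suc c < n \<Longrightarrow> equiv_at [] (caps 0 n @ [V (2*n - 2 - c)]) (caps 0 n @ [V c])"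
proof -
  assume h: "Suc c < n"
  let ?C = "caps 0 c @ [Cap True c, Cap True (Suc c)]"
  have cs: "caps 0 n = ?C @ caps (c+2) n"
    using h upt_split[of 0 c n] upt_split[of c "c+2" n] by (simp add: caps_def upt_conv_Cons)
  have r0: "run [] (caps 0 c) = Some (nested_row c)"
    using run_caps[of 0 c] by (simp add: nested_row_def)
  have r2: "run [] ?C = Some (nested_row (c+2))"
    using run_caps[of 0 "c+2"] h by (simp add: nested_row_def caps_def)
  have "equiv_at (nested_row (c+2)) (caps (c+2) n @ [V c]) (V c # caps (c+2) n)"
    using run_append_Some[OF run_caps[of "c+2" n], of "[V c]"] h
      equiv_at_commute_right_of[of "caps (c+2) n" "V c" "nested_row (c+2)"]
    by (auto simp: caps_def step_V simp del: step.simps)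
  note V_back = equiv_at_sym[OF this]
  have "caps 0 n @ [V (2*n - 2 - c)] = ?C @ (caps (c+2) n @ [V (2*n - 2 - c)]) @ []"
    using cs by simp
  also have "equiv_at [] \<dots> (?C @ (V (c+2) # caps (c+2) n) @ [])"
    using h by (intro equiv_at_cong[OF _ r2] V_through_caps_right) simp
  also have "\<dots> = caps 0 c @ [Cap True c, Cap True (Suc c), V (Suc (Suc c))] @ caps (c+2) n"
    by simp
  also have "equiv_at [] \<dots> (caps 0 c @ [Cap True c, Cap True (Suc c), V c] @ caps (c+2) n)"
    using equiv_at_cong[OF V_through_cap_pair r0] .
  also have "\<dots> = ?C @ (V c # caps (c+2) n) @ []"
    by simp
  also have "equiv_at [] \<dots> (?C @ (caps (c+2) n @ [V c]) @ [])"
    using equiv_at_cong[OF V_back r2] .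
  finally show ?thesis
    using cs by simp
qed

lemma absorb_upward_V:
  assumes "twisted_braid n \<beta>" "k \<le> n" "k \<le> q" "Suc q < 2*k"
  shows "equiv_at [] (partial_closure n k \<beta> @ [V q]) (partial_closure n k (BV (2*k - 2 - q) # \<beta>))"
proof -
  define P where "P = q + 2*(n-k)"
  define c where "c = 2*k - 2 - q"
  have cn: "Suc c < n" "2*n - 2 - c = P" "Suc P < 2*n"
    using assms unfolding c_def P_def by auto
  have braid_left: "\<forall>h\<in>set (map bgen_to_gen \<beta>). pos h + top_ar h \<le> pos (V P) \<and> top_ar h = bot_ar h"
  proof
    fix h
    assume "h \<in> set (map bgen_to_gen \<beta>)"
    then obtain g where g: "g \<in> set \<beta>" "h = bgen_to_gen g"
      by auto
    then have "bgen_ok n g"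
      using assms(1) by (auto simp: twisted_braid_def)
    then show "pos h + top_ar h \<le> pos (V P) \<and> top_ar h = bot_ar h"
      using g assms(2,3) unfolding P_def by (cases g) auto
  qed
  have "partial_closure n k \<beta> @ [V q] = (caps 0 n @ map bgen_to_gen \<beta>) @ (cups k n @ [V q])"
    by (simp add: partial_closure_def)
  also have "equiv_at [] \<dots> ((caps 0 n @ map bgen_to_gen \<beta>) @ (V P # cups k n))"
    using assms unfolding P_def by (intro equiv_at_append_left[OF V_through_cups run_caps_braid]) auto
  also have "\<dots> = caps 0 n @ (map bgen_to_gen \<beta> @ [V P]) @ cups k n"
    by simp
  also have "equiv_at [] \<dots> (caps 0 n @ (V P # map bgen_to_gen \<beta>) @ cups k n)"
  proof (intro equiv_at_cong equiv_at_commute_left_of[OF braid_left])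
    show "run (nested_row n) (map bgen_to_gen \<beta> @ [V P]) \<noteq> None"
      using run_append_Some[OF run_braid[OF assms(1)], of "[V P]"] cn by (simp add: step_V del: step.simps)
    show "run [] (caps 0 n) = Some (nested_row n)"
      using run_caps[of 0 n] by (simp add: nested_row_def)
  qed
  also have "\<dots> = (caps 0 n @ [V P]) @ (map bgen_to_gen \<beta> @ cups k n)"
    by simp
  also have "equiv_at [] \<dots> ((caps 0 n @ [V c]) @ (map bgen_to_gen \<beta> @ cups k n))"
    using V_through_caps[OF cn(1)] cn(2) by (intro equiv_at_append_right) simp
  finally show ?thesis
    unfolding partial_closure_def c_def by simp
qed

lemma absorb_downward_virtual:
  "twisted_braid n \<beta> \<Longrightarrow> k \<le> n \<Longrightarrow> within k u \<Longrightarrow>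
   \<exists>\<beta>'. twisted_braid n \<beta>' \<and> equiv_at [] (partial_closure n k \<beta> @ virtual u) (partial_closure n k \<beta>')"
proof (induction u arbitrary: \<beta>)
  case (Cons i u)
  have "twisted_braid n (\<beta> @ [BV i])"
    using Cons.prems by (auto simp: twisted_braid_def)
  then obtain \<beta>' where \<beta>': "twisted_braid n \<beta>'"
    "equiv_at [] (partial_closure n k (\<beta> @ [BV i]) @ virtual u) (partial_closure n k \<beta>')"
    using Cons.IH Cons.prems by auto
  have "equiv_at [] ((partial_closure n k \<beta> @ [V i]) @ virtual u) (partial_closure n k (\<beta> @ [BV i]) @ virtual u)"
    using absorb_braid_gen[of n \<beta> k "BV i"] Cons.prems by (intro equiv_at_append_right) simp
  from equiv_at_trans[OF this \<beta>'(2)] show ?case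
    using \<beta>'(1) by auto
qed auto

lemma absorb_upward_virtual:
  "twisted_braid n \<beta> \<Longrightarrow> k \<le> n \<Longrightarrow> within k u \<Longrightarrow>
   \<exists>\<beta>'. twisted_braid n \<beta>' \<and> equiv_at [] (partial_closure n k \<beta> @ virtual (map ((+) k) u)) (partial_closure n k \<beta>')"
proof (induction u arbitrary: \<beta>)
  case (Cons i u)
  let ?g = "BV (2*k - 2 - (k + i))"
  have "twisted_braid n (?g # \<beta>)"
    using Cons.prems by (auto simp: twisted_braid_def)
  then obtain \<beta>' where \<beta>': "twisted_braid n \<beta>'"
    "equiv_at [] (partial_closure n k (?g # \<beta>) @ virtual (map ((+) k) u)) (partial_closure n k \<beta>')"
    using Cons.IH Cons.prems by auto
  have "equiv_at [] ((partial_closure n k \<beta> @ [V (k + i)]) @ virtual (map ((+) k) u))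
      (partial_closure n k (?g # \<beta>) @ virtual (map ((+) k) u))"
    using absorb_upward_V[of n \<beta> k "k + i"] Cons.prems by (intro equiv_at_append_right) simp
  from equiv_at_trans[OF this \<beta>'(2)] show ?case
    using \<beta>'(1) by auto
qed auto

text \<open>A virtual word fixing the row factors, up to Coxeter moves, into words on the downward and
  on the upward points, and both enter the braid.\<close>

lemma absorb_stabilizer:
  assumes "twisted_braid n \<beta>" "k \<le> n" "within (2*k) \<rho>" "apply_swaps \<rho> (nested_row k) = nested_row k"
  shows "\<exists>\<beta>'. twisted_braid n \<beta>' \<and> equiv_at [] (partial_closure n k \<beta> @ virtual \<rho>) (partial_closure n k \<beta>')"
proof -
  obtain u1 u2 where u: "within k u1" "within k u2" "coxeter_equiv (2*k) \<rho> (u1 @ map ((+) k) u2)"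
    using stabilizer_decomp[OF assms(3,4)] by blast
  obtain \<beta>1 where \<beta>1: "twisted_braid n \<beta>1"
    "equiv_at [] (partial_closure n k \<beta> @ virtual u1) (partial_closure n k \<beta>1)"
    using absorb_downward_virtual assms u by blast
  obtain \<beta>2 where \<beta>2: "twisted_braid n \<beta>2"
    "equiv_at [] (partial_closure n k \<beta>1 @ virtual (map ((+) k) u2)) (partial_closure n k \<beta>2)"
    using absorb_upward_virtual \<beta>1 assms u by blast
  have "equiv_at [] (partial_closure n k \<beta> @ virtual \<rho>) (partial_closure n k \<beta> @ virtual (u1 @ map ((+) k) u2))"
    using coxeter_equiv_equiv_at[OF u(3) assms(3)]
    by (intro equiv_at_append_left[OF _ run_partial_closure[OF assms(2,1)]]) simp
  also have "\<dots> = (partial_closure n k \<beta> @ virtual u1) @ virtual (map ((+) k) u2)"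
    by simp
  also have "equiv_at [] \<dots> (partial_closure n k \<beta>1 @ virtual (map ((+) k) u2))"
    using equiv_at_append_right[OF \<beta>1(2)] .
  also have "equiv_at [] \<dots> (partial_closure n k \<beta>2)"
    using \<beta>2(2) .
  finally show ?thesis
    using \<beta>2(1) by blast
qed

fun shift_bgen :: "bgen \<Rightarrow> bgen" where
  "shift_bgen (BX t i) = BX t (Suc i)"
| "shift_bgen (BV i) = BV (Suc i)"
| "shift_bgen (BB i) = BB (Suc i)"

lemma twisted_braid_shift_bgen: "twisted_braid n \<beta> \<Longrightarrow> twisted_braid (Suc n) (map shift_bgen \<beta>)"
proof -
  have "bgen_ok n g \<Longrightarrow> bgen_ok (Suc n) (shift_bgen g)" for g
    by (cases g) auto
  then show "twisted_braid n \<beta> \<Longrightarrow> twisted_braid (Suc n) (map shift_bgen \<beta>)"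
    unfolding twisted_braid_def by auto
qed

lemma partial_closure_shift:
  "Cap True 0 # map (shift_gen 1) (partial_closure n k \<beta>) = partial_closure (Suc n) (Suc k) (map shift_bgen \<beta>)"
proof -
  have caps: "Cap True 0 # map (shift_gen 1) (caps 0 n) = caps 0 (Suc n)"
    by (simp add: caps_def upt_conv_Cons map_Suc_upt[symmetric] del: upt_Suc)
  have "bgen_to_gen (shift_bgen g) = shift_gen 1 (bgen_to_gen g)" for g
    by (cases g) auto
  then have braid: "map (shift_gen 1) (map bgen_to_gen \<beta>) = map bgen_to_gen (map shift_bgen \<beta>)"
    by simp
  have "map (shift_gen 1) (cups k n) = map Cup (map Suc (rev [k..<n]))"
    by (simp add: cups_def)
  moreover have "map Suc (rev [k..<n]) = rev [Suc k..<Suc n]"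
    by (simp only: rev_map[symmetric] map_Suc_upt)
  ultimately have cups: "map (shift_gen 1) (cups k n) = cups (Suc k) (Suc n)"
    by (simp add: cups_def del: upt_Suc)
  show ?thesis
    unfolding partial_closure_def map_append append_Cons[symmetric] caps braid cups ..
qed

text \<open>A cap at the right end of the row becomes a new leftmost strand of the braid: flip it into a
  cap at the far left, where it is the outermost cap of the closure, and let its arc make a
  virtual detour around the whole partial closure.\<close>

lemma partial_closure_new_strand:
  assumes "k \<le> n" "twisted_braid n \<beta>"
  shows "equiv_at [] (partial_closure n k \<beta> @ [Cap False (2*k)])
    (partial_closure (Suc n) (Suc k) (map shift_bgen \<beta>) @ virtual [0..<Suc (2*k)])"
proof -
  let ?N = "partial_closure n k \<beta>" and ?R = "virtual (rev [0..<Suc (2*k)])"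
  have rN: "run [] ?N = Some (nested_row k)"
    using run_partial_closure assms by blast
  have rNC: "run [] (?N @ [Cap False (2*k)]) = Some (nested_row k @ [False, True])"
    using run_append_Some[OF rN, of "[Cap False (2*k)]"] by (simp add: nested_row_def)
  have detour: "equiv_at [True, False] (map (shift_gen 1) ?N) ([V 0] @ ?N @ ?R)"
    using detour[OF run_extend[OF rN, of "[False]"], of True] by simp
  have "partial_closure (Suc n) (Suc k) (map shift_bgen \<beta>) @ virtual [0..<Suc (2*k)]
      = [Cap True 0] @ map (shift_gen 1) ?N @ virtual [0..<Suc (2*k)]"
    by (simp flip: partial_closure_shift)
  also have "equiv_at [] \<dots> ([Cap True 0] @ ([V 0] @ ?N @ ?R) @ virtual [0..<Suc (2*k)])"
    by (intro equiv_at_cong[OF detour]) simp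
  also have "\<dots> = [Cap True 0, V 0] @ ?N @ ?R @ virtual [0..<Suc (2*k)]"
    by simp
  also have "equiv_at [] \<dots> ([Cap False 0] @ ?N @ ?R @ virtual [0..<Suc (2*k)])"
    using equiv_at_append_right[OF equiv_at_sym[OF cap_flip[of 0 "[]" True]]] by simp
  also have "\<dots> = (Cap False 0 # ?N) @ ?R @ virtual [0..<Suc (2*k)]"
    by simp
  also have "equiv_at [] \<dots> ((?N @ [Cap False (2*k)]) @ ?R @ virtual [0..<Suc (2*k)])"
    using rightmost_cap_commute[OF rN, of "[]" False] by (intro equiv_at_append_right) simp
  also have "\<dots> = (?N @ [Cap False (2*k)]) @ virtual (rev [0..<Suc (2*k)] @ [0..<Suc (2*k)]) @ []"
    by simp
  also have "equiv_at [] \<dots> ((?N @ [Cap False (2*k)]) @ [] @ [])"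
    by (intro equiv_at_cong[OF _ rNC] virtual_cancel') (auto simp: within_upt)
  finally have "equiv_at [] (partial_closure (Suc n) (Suc k) (map shift_bgen \<beta>) @ virtual [0..<Suc (2*k)])
      (?N @ [Cap False (2*k)])"
    by simp
  then show ?thesis
    by (rule equiv_at_sym)
qed

section \<open>Every prefix of a diagram is a partially closed braid\<close>

lemma virtual_X_normal_form:
  assumes "within (2*k) u" "w = apply_swaps u (nested_row k)" "Suc i < length w" "w ! i" "w ! Suc i"
  shows "\<exists>\<rho>. within (2*k) \<rho> \<and> apply_swaps \<rho> (nested_row k) = nested_row k \<and> Suc (n_down (take i w)) < k \<and>
    equiv_at (nested_row k) (virtual u @ [X t i]) (virtual \<rho> @ [X t (n_down (take i w))] @ virtual (unsort w))"
proof -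
  let ?s = "unsort w" and ?j = "n_down (take i w)"
  have lw: "length w = 2*k" and "n_down w = k"
    using assms(1,2) n_down_apply_swaps[of "nested_row k" u] by (simp_all add: n_down_nested_row)
  then have sorted: "sorted_row w = nested_row k"
    using sorted_row_eq_nested_row by blast
  have s: "within (2*k) ?s" "apply_swaps ?s (nested_row k) = w"
    using unsort_correct[of w] sorted lw by auto
  define \<rho> where "\<rho> = u @ rev ?s"
  have \<rho>: "within (2*k) \<rho>" "apply_swaps \<rho> (nested_row k) = nested_row k"
    unfolding \<rho>_def using assms s apply_swaps_cancel[of "nested_row k" ?s]
    by (simp_all add: apply_swaps_append)
  have "virtual u @ [X t i] = virtual u @ [] @ [X t i]"
    by simp
  also have "equiv_at (nested_row k) \<dots> (virtual u @ virtual (rev ?s @ ?s) @ [X t i])"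
    using equiv_at_sym[OF virtual_cancel'[of w ?s]] s lw assms(1,2) by (intro equiv_at_virtual_cong) auto
  also have "\<dots> = virtual \<rho> @ (virtual ?s @ [X t i]) @ []"
    unfolding \<rho>_def by simp
  also have "equiv_at (nested_row k) \<dots> (virtual \<rho> @ ([X t ?j] @ virtual ?s) @ [])"
    using X_through_unsort[of i w t] assms \<rho> sorted by (intro equiv_at_virtual_cong) auto
  finally show ?thesis
    using \<rho> n_down_take_less[of i w] assms \<open>n_down w = k\<close> by auto
qed

lemma cup_through_virtual_normalized:
  assumes "run x [Cup j] = Some y" "within (length y) v"
  shows "\<exists>u. within (length x) u \<and> apply_swaps u x ! j \<and> run (apply_swaps u x) [Cup j] = Some (apply_swaps v y) \<and>
    equiv_at x (Cup j # virtual v) (virtual u @ [Cup j])"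
proof -
  obtain c u1 where u1: "within (length x) u1" "equiv_at x (Cup j # virtual v) (virtual u1 @ [Cup c])"
    using cup_through_virtual[OF assms] by blast
  have r1: "run x (virtual u1) = Some (apply_swaps u1 x)"
    using run_virtual u1(1) by blast
  have "run x (Cup j # virtual v) = Some (apply_swaps v y)"
    using assms run_append_Some[OF assms(1), of "virtual v"] by (simp add: run_virtual del: run.simps)
  then have rc: "run (apply_swaps u1 x) [Cup c] = Some (apply_swaps v y)"
    using equiv_at_run[OF u1(2)] run_append_Some[OF r1] by simp
  have lx: "length (apply_swaps u1 x) = length x"
    using u1(1) by simp
  have "Suc j < length (apply_swaps u1 x)"
    using assms(1) lx by (auto split: if_splits)
  then obtain u2 where u2: "within (length x) u2" "apply_swaps u2 (apply_swaps u1 x) ! j"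
    "run (apply_swaps u2 (apply_swaps u1 x)) [Cup j] = Some (apply_swaps v y)"
    "equiv_at (apply_swaps u1 x) [Cup c] (virtual u2 @ [Cup j])"
    using cup_normalize[OF rc] unfolding lx by blast
  have "equiv_at x (virtual u1 @ [Cup c]) (virtual (u1 @ u2) @ [Cup j])"
    using equiv_at_virtual_cong[OF u2(4) u1(1), of "[]"] by simp
  then have "equiv_at x (Cup j # virtual v) (virtual (u1 @ u2) @ [Cup j])"
    using equiv_at_trans[OF u1(2)] by blast
  then show ?thesis
    using u1 u2 by (intro exI[of _ "u1 @ u2"]) (auto simp: apply_swaps_append)
qed

lemma virtual_Cup_normal_form:
  assumes "within (2 * Suc m) u" "run (apply_swaps u (nested_row (Suc m))) [Cup i] = Some w'"
    "within (2*m) v" "apply_swaps v (nested_row m) = w'"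
  shows "\<exists>\<rho>. within (2 * Suc m) \<rho> \<and> apply_swaps \<rho> (nested_row (Suc m)) = nested_row (Suc m) \<and>
    equiv_at (nested_row (Suc m)) (virtual u @ [Cup i]) (virtual \<rho> @ [Cup m] @ virtual v)"
proof -
  let ?x = "nested_row (Suc m)"
  obtain \<gamma> where \<gamma>: "within (2 * Suc m) \<gamma>" "apply_swaps \<gamma> (apply_swaps u ?x) ! m"
    "run (apply_swaps \<gamma> (apply_swaps u ?x)) [Cup m] = Some w'"
    "equiv_at (apply_swaps u ?x) [Cup i] (virtual \<gamma> @ [Cup m])"
    using cup_normalize[OF assms(2), of m] assms(1) by auto
  obtain u' where u': "within (2 * Suc m) u'" "apply_swaps u' ?x ! m" "run (apply_swaps u' ?x) [Cup m] = Some w'"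
    "equiv_at ?x (Cup m # virtual v) (virtual u' @ [Cup m])"
    using cup_through_virtual_normalized[OF run_Cup_nested_row[of m], of v] assms(3,4) by auto
  have same_row: "apply_swaps u' ?x = apply_swaps (u @ \<gamma>) ?x"
    using Cup_row_inj[OF u'(3)] \<gamma>(2,3) u'(2) by (simp add: apply_swaps_append)
  define \<rho> where "\<rho> = u @ \<gamma> @ rev u'"
  have \<rho>: "within (2 * Suc m) \<rho>" "apply_swaps \<rho> ?x = ?x"
    unfolding \<rho>_def using assms(1) \<gamma>(1) u'(1) same_row apply_swaps_cancel[of ?x u']
    by (simp_all add: apply_swaps_append)
  have "equiv_at ?x (virtual u @ [Cup i] @ []) (virtual u @ (virtual \<gamma> @ [Cup m]) @ [])"
    using \<gamma>(4) assms(1) by (intro equiv_at_virtual_cong) auto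
  also have "\<dots> = virtual (u @ \<gamma>) @ [] @ [Cup m]"
    by simp
  also have "equiv_at ?x \<dots> (virtual (u @ \<gamma>) @ virtual (rev u' @ u') @ [Cup m])"
    using equiv_at_sym[OF virtual_cancel'[of "apply_swaps (u @ \<gamma>) ?x" u']] assms(1) \<gamma>(1) u'(1)
    by (intro equiv_at_virtual_cong) auto
  also have "\<dots> = virtual \<rho> @ (virtual u' @ [Cup m]) @ []"
    unfolding \<rho>_def by simp
  also have "equiv_at ?x \<dots> (virtual \<rho> @ (Cup m # virtual v) @ [])"
    using equiv_at_sym[OF u'(4)] \<rho> by (intro equiv_at_virtual_cong) auto
  finally show ?thesis
    using \<rho> by auto
qed

lemma X_rotate_right:
  assumes "Suc i < length x" "\<not> x ! Suc i"
  shows "equiv_at x [X t i] [Cap False i, X (\<not> t) (Suc i), Cup (Suc (Suc i))]"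
proof -
  obtain A a b B where "x = A @ a # b # B" "length A = i"
    using split_nth2 assms by blast
  with assms(2) have x: "x = A @ a # False # B" "length A = i"
    by (auto simp: nth_append)
  have "equiv_at x [X t i] [Cap False (Suc i), Cup (Suc (Suc i)), X t i]"
    using equiv_at_cong[OF equiv_at_sym[OF equiv_at_zig2[of "Suc i" x False]], of x "[]" "[X t i]"] assms by simp
  also have "equiv_at x \<dots> [Cap False (Suc i), X t i, Cup (Suc (Suc i))]"
  proof -
    have "equiv_at (A @ a # False # True # False # B) [Cup (Suc (Suc i)), X t i]
        [X t i, setpos (Cup (Suc (Suc i))) (pos (Cup (Suc (Suc i))) + bot_ar (X t i) - top_ar (X t i))]"
      using x by (intro equiv_at_interchange) (auto simp: nth_append)
    from equiv_at_cong[OF this, of x "[Cap False (Suc i)]" "[]"] show ?thesis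
      using x by (simp add: nth_append)
  qed
  also have "equiv_at x \<dots> [Cap False i, X (\<not> t) (Suc i), Cup (Suc (Suc i))]"
    using equiv_at_cong[OF equiv_at_sym[OF equiv_at_pfX_cap[of i x False "\<not> t"]], of x "[]" "[Cup (Suc (Suc i))]"]
      assms by simp
  finally show ?thesis .
qed

lemma X_rotate_left:
  assumes "Suc i < length x" "\<not> x ! i"
  shows "equiv_at x [X t i] [Cap True (Suc (Suc i)), X (\<not> t) (Suc i), Cup i]"
proof -
  obtain A a b B where "x = A @ a # b # B" "length A = i"
    using split_nth2 assms by blast
  with assms(2) have x: "x = A @ False # b # B" "length A = i"
    by (auto simp: nth_append)
  have "equiv_at x [X t i] [Cap True (Suc i), Cup i, X t i]"
    using equiv_at_cong[OF equiv_at_sym[OF equiv_at_zig1[of i x True]], of x "[]" "[X t i]"] assms by simp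
  also have "equiv_at x \<dots> [Cap True (Suc i), X t (Suc (Suc i)), Cup i]"
  proof -
    have "equiv_at (A @ False # True # False # b # B) [Cup i, setpos (X t (Suc (Suc i)))
        (pos (X t (Suc (Suc i))) + bot_ar (Cup i) - top_ar (Cup i))] [X t (Suc (Suc i)), Cup i]"
      using x by (intro equiv_at_interchange') (auto simp: nth_append)
    from equiv_at_cong[OF this, of x "[Cap True (Suc i)]" "[]"] show ?thesis
      using x by (simp add: nth_append)
  qed
  also have "equiv_at x \<dots> [Cap True (Suc (Suc i)), X (\<not> t) (Suc i), Cup i]"
    using equiv_at_cong[OF equiv_at_pfX_cap[of "Suc i" x True t], of x "[]" "[Cup i]"] assms by simp
  finally show ?thesis .
qed

lemma Bar_rotate:
  assumes "i < length x" "\<not> x ! i"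
  shows "equiv_at x [Bar i] [Cap True (Suc i), Bar (Suc i), Cup i]"
proof -
  obtain A a B where "x = A @ a # B" "length A = i"
    using split_nth assms by blast
  with assms(2) have x: "x = A @ False # B" "length A = i"
    by (auto simp: nth_append)
  have "equiv_at x [Bar i] [Cap True (Suc i), Cup i, Bar i]"
    using equiv_at_cong[OF equiv_at_sym[OF equiv_at_zig1[of i x True]], of x "[]" "[Bar i]"] assms by simp
  also have "equiv_at x \<dots> [Cap True (Suc i), Bar (Suc (Suc i)), Cup i]"
  proof -
    have "equiv_at (A @ False # True # False # B) [Cup i, setpos (Bar (Suc (Suc i)))
        (pos (Bar (Suc (Suc i))) + bot_ar (Cup i) - top_ar (Cup i))] [Bar (Suc (Suc i)), Cup i]"
      using x by (intro equiv_at_interchange') (auto simp: nth_append)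
    from equiv_at_cong[OF this, of x "[Cap True (Suc i)]" "[]"] show ?thesis
      using x by (simp add: nth_append)
  qed
  also have "equiv_at x \<dots> [Cap True (Suc i), Bar (Suc i), Cup i]"
    using equiv_at_cong[OF equiv_at_sym[OF equiv_at_bar_cap[of "Suc i" x True]], of x "[]" "[Cup i]"] assms by simp
  finally show ?thesis .
qed

definition braided :: "gen list \<Rightarrow> bool list \<Rightarrow> nat \<Rightarrow> bool" where
  "braided P w n \<longleftrightarrow> run [] P = Some w \<and>
     (\<exists>k \<beta> u. k \<le> n \<and> twisted_braid n \<beta> \<and> within (2*k) u \<and> equiv_at [] P (partial_closure n k \<beta> @ virtual u))"

lemma braidedI:
  "run [] P = Some w \<Longrightarrow> k \<le> n \<Longrightarrow> twisted_braid n \<beta> \<Longrightarrow> within (2*k) u \<Longrightarrow>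
   equiv_at [] P (partial_closure n k \<beta> @ virtual u) \<Longrightarrow> braided P w n"
  unfolding braided_def by blast

lemma braidedE:
  assumes "braided P w n"
  obtains k \<beta> u where "k \<le> n" "twisted_braid n \<beta>" "within (2*k) u"
    "equiv_at [] P (partial_closure n k \<beta> @ virtual u)" "run [] P = Some w"
    "run [] (partial_closure n k \<beta>) = Some (nested_row k)" "apply_swaps u (nested_row k) = w" "length w = 2*k"
proof -
  obtain k \<beta> u where d: "k \<le> n" "twisted_braid n \<beta>" "within (2*k) u"
    "equiv_at [] P (partial_closure n k \<beta> @ virtual u)" "run [] P = Some w"
    using assms unfolding braided_def by blast
  have rN: "run [] (partial_closure n k \<beta>) = Some (nested_row k)"
    using run_partial_closure d by blast
  have "run [] (partial_closure n k \<beta> @ virtual u) = Some (apply_swaps u (nested_row k))"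
    using run_append_Some[OF rN] run_virtual d(3) by simp
  then have "apply_swaps u (nested_row k) = w"
    using equiv_at_run[OF d(4)] d(5) by simp
  moreover from this have "length w = 2*k"
    using d(3) by auto
  ultimately show thesis
    using that d rN by blast
qed

lemma braided_Nil: "braided [] [] 0"
  by (rule braidedI[of _ _ 0 0 "[]" "[]"]) (auto simp: partial_closure_def caps_def cups_def twisted_braid_def)

lemma braided_replace_last:
  assumes "braided P w n" "equiv_at w [g] G" "braided (P @ G) w' n'"
  shows "braided (P @ [g]) w' n'"
proof -
  have "run [] P = Some w"
    using assms(1) by (blast elim: braidedE)
  from equiv_at_append_left[OF assms(2) this] show ?thesis
    using assms(3) equiv_at_run equiv_at_trans unfolding braided_def by metis
qed

lemma braided_V:
  assumes "braided P w n" "Suc i < length w"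
  shows "braided (P @ [V i]) (swap_at i w) n"
proof -
  obtain k \<beta> u where d: "k \<le> n" "twisted_braid n \<beta>" "within (2*k) u"
    "equiv_at [] P (partial_closure n k \<beta> @ virtual u)" "run [] P = Some w" "length w = 2*k"
    using assms(1) by (rule braidedE)
  show ?thesis
  proof (rule braidedI)
    show "run [] (P @ [V i]) = Some (swap_at i w)"
      using run_append_Some[OF d(5)] assms(2) by (simp add: step_V del: step.simps)
    show "equiv_at [] (P @ [V i]) (partial_closure n k \<beta> @ virtual (u @ [i]))"
      using equiv_at_append_right[OF d(4), of "[V i]"] by simp
  qed (use d assms in auto)
qed

lemma braided_Cap:
  assumes "braided P w n" "i \<le> length w"
  shows "braided (P @ [Cap d i]) (take i w @ [d, \<not> d] @ drop i w) (Suc n)"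
proof -
  obtain k \<beta> u where d: "k \<le> n" "twisted_braid n \<beta>" "within (2*k) u"
    "equiv_at [] P (partial_closure n k \<beta> @ virtual u)" "run [] P = Some w"
    "run [] (partial_closure n k \<beta>) = Some (nested_row k)" "length w = 2*k"
    using assms(1) by (rule braidedE)
  obtain j u1 where u1: "j \<le> 2*k" "within (2*k + 2) u1"
    "equiv_at (nested_row k) (virtual u @ [Cap d i]) (Cap d j # virtual u1)"
    using cap_through_virtual[of "nested_row k" u i d] d assms by auto
  obtain \<gamma> where \<gamma>: "within (2*k + 2) \<gamma>" "equiv_at (nested_row k) [Cap d j] (Cap False (2*k) # virtual \<gamma>)"
    using cap_normalize[of j "nested_row k" "2*k" d] u1 by auto
  show ?thesis
  proof (rule braidedI)
    show "run [] (P @ [Cap d i]) = Some (take i w @ [d, \<not> d] @ drop i w)"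
      using run_append_Some[OF d(5)] assms by simp
    have "equiv_at [] (P @ [Cap d i]) (partial_closure n k \<beta> @ virtual u @ [Cap d i])"
      using equiv_at_append_right[OF d(4), of "[Cap d i]"] by simp
    also have "equiv_at [] \<dots> (partial_closure n k \<beta> @ [Cap d j] @ virtual u1)"
      using equiv_at_append_left[OF u1(3) d(6)] by simp
    also have "equiv_at [] \<dots> (partial_closure n k \<beta> @ (Cap False (2*k) # virtual \<gamma>) @ virtual u1)"
      using equiv_at_cong[OF \<gamma>(2) d(6)] .
    also have "\<dots> = (partial_closure n k \<beta> @ [Cap False (2*k)]) @ virtual (\<gamma> @ u1)"
      by simp
    also have "equiv_at [] \<dots> ((partial_closure (Suc n) (Suc k) (map shift_bgen \<beta>) @ virtual [0..<Suc (2*k)]) @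
        virtual (\<gamma> @ u1))"
      using equiv_at_append_right[OF partial_closure_new_strand[OF d(1,2)]] .
    finally show "equiv_at [] (P @ [Cap d i])
        (partial_closure (Suc n) (Suc k) (map shift_bgen \<beta>) @ virtual ([0..<Suc (2*k)] @ \<gamma> @ u1))"
      by simp
  qed (use d \<gamma> u1 twisted_braid_shift_bgen in \<open>auto simp: within_upt\<close>)
qed

lemma braided_Bar_down:
  assumes "braided P w n" "i < length w" "w ! i"
  shows "braided (P @ [Bar i]) w n"
proof -
  obtain k \<beta> u where d: "k \<le> n" "twisted_braid n \<beta>" "within (2*k) u"
    "equiv_at [] P (partial_closure n k \<beta> @ virtual u)" "run [] P = Some w"
    "run [] (partial_closure n k \<beta>) = Some (nested_row k)" "apply_swaps u (nested_row k) = w" "length w = 2*k"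
    using assms(1) by (rule braidedE)
  obtain j where j: "j < 2*k" "nested_row k ! j" "equiv_at (nested_row k) (virtual u @ [Bar i]) (Bar j # virtual u)"
    using bar_through_virtual[of "nested_row k" u i] d assms by auto
  have "j < k"
    using j nth_nested_row(2)[of k j] by (cases "j < k") auto
  show ?thesis
  proof (rule braidedI)
    show "run [] (P @ [Bar i]) = Some w"
      using run_append_Some[OF d(5)] assms by simp
    have "equiv_at [] (P @ [Bar i]) (partial_closure n k \<beta> @ virtual u @ [Bar i])"
      using equiv_at_append_right[OF d(4), of "[Bar i]"] by simp
    also have "equiv_at [] \<dots> ((partial_closure n k \<beta> @ [Bar j]) @ virtual u)"
      using equiv_at_append_left[OF j(3) d(6)] by simp
    also have "equiv_at [] \<dots> (partial_closure n k (\<beta> @ [BB j]) @ virtual u)"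
      using absorb_braid_gen[of n \<beta> k "BB j"] d \<open>j < k\<close> by (intro equiv_at_append_right) simp
    finally show "equiv_at [] (P @ [Bar i]) (partial_closure n k (\<beta> @ [BB j]) @ virtual u)" .
  qed (use d \<open>j < k\<close> in \<open>auto simp: twisted_braid_def\<close>)
qed

lemma braided_X_down_down:
  assumes "braided P w n" "Suc i < length w" "w ! i" "w ! Suc i"
  shows "braided (P @ [X t i]) w n"
proof -
  obtain k \<beta> u where d: "k \<le> n" "twisted_braid n \<beta>" "within (2*k) u"
    "equiv_at [] P (partial_closure n k \<beta> @ virtual u)" "run [] P = Some w"
    "run [] (partial_closure n k \<beta>) = Some (nested_row k)" "apply_swaps u (nested_row k) = w" "length w = 2*k"
    using assms(1) by (rule braidedE)
  obtain \<rho> where \<rho>: "within (2*k) \<rho>" "apply_swaps \<rho> (nested_row k) = nested_row k" "Suc (n_down (take i w)) < k"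
    "equiv_at (nested_row k) (virtual u @ [X t i]) (virtual \<rho> @ [X t (n_down (take i w))] @ virtual (unsort w))"
    using virtual_X_normal_form[of k u w i t] d assms by auto
  obtain \<beta>' where \<beta>': "twisted_braid n \<beta>'" "equiv_at [] (partial_closure n k \<beta> @ virtual \<rho>) (partial_closure n k \<beta>')"
    using absorb_stabilizer[OF d(2,1) \<rho>(1,2)] by blast
  let ?j = "n_down (take i w)"
  show ?thesis
  proof (rule braidedI)
    show "run [] (P @ [X t i]) = Some w"
      using run_append_Some[OF d(5)] assms swap_at_same[of i w] by (simp add: swap_at_def)
    have "equiv_at [] (P @ [X t i]) (partial_closure n k \<beta> @ virtual u @ [X t i])"
      using equiv_at_append_right[OF d(4), of "[X t i]"] by simp
    also have "equiv_at [] \<dots> (partial_closure n k \<beta> @ virtual \<rho> @ [X t ?j] @ virtual (unsort w))"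
      using equiv_at_append_left[OF \<rho>(4) d(6)] .
    also have "\<dots> = (partial_closure n k \<beta> @ virtual \<rho>) @ [X t ?j] @ virtual (unsort w)"
      by simp
    also have "equiv_at [] \<dots> (partial_closure n k \<beta>' @ [X t ?j] @ virtual (unsort w))"
      using equiv_at_append_right[OF \<beta>'(2)] .
    also have "equiv_at [] \<dots> (partial_closure n k (\<beta>' @ [BX t ?j]) @ virtual (unsort w))"
      using equiv_at_append_right[OF absorb_braid_gen[OF \<beta>'(1) d(1), of "BX t ?j"], of "virtual (unsort w)"] \<rho>(3)
      by simp
    finally show "equiv_at [] (P @ [X t i]) (partial_closure n k (\<beta>' @ [BX t ?j]) @ virtual (unsort w))" .
    show "within (2*k) (unsort w)"
      using unsort_correct[of w] d by simp
  qed (use d \<beta>' \<rho> in \<open>auto simp: twisted_braid_def\<close>)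
qed

lemma braided_Cup:
  assumes "braided P w n" "run w [Cup i] = Some w'"
  shows "braided (P @ [Cup i]) w' n"
proof -
  obtain k \<beta> u where d: "k \<le> n" "twisted_braid n \<beta>" "within (2*k) u"
    "equiv_at [] P (partial_closure n k \<beta> @ virtual u)" "run [] P = Some w"
    "run [] (partial_closure n k \<beta>) = Some (nested_row k)" "apply_swaps u (nested_row k) = w" "length w = 2*k"
    using assms(1) by (rule braidedE)
  obtain A p q B where w: "w = A @ p # q # B" "length A = i" "p \<noteq> q" "w' = A @ B"
    using assms(2) run_Cup_Some_iff by metis
  then obtain m where k: "k = Suc m"
    using d(8) by (cases k) auto
  have "n_down w = k"
    using d(3,7) n_down_apply_swaps[of "nested_row k" u] by (simp add: n_down_nested_row)
  moreover have "length w' = 2*m"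
    using w d(8) k by simp
  ultimately have "sorted_row w' = nested_row m"
    using w k by (intro sorted_row_eq_nested_row) (cases p; cases q; auto)
  then have v: "within (2*m) (unsort w')" "apply_swaps (unsort w') (nested_row m) = w'"
    using unsort_correct[of w'] w d(8) k by auto
  obtain \<rho> where \<rho>: "within (2*k) \<rho>" "apply_swaps \<rho> (nested_row k) = nested_row k"
    "equiv_at (nested_row k) (virtual u @ [Cup i]) (virtual \<rho> @ [Cup m] @ virtual (unsort w'))"
    using virtual_Cup_normal_form[of m u i w' "unsort w'"] d v assms(2) k by auto
  obtain \<beta>' where \<beta>': "twisted_braid n \<beta>'" "equiv_at [] (partial_closure n k \<beta> @ virtual \<rho>) (partial_closure n k \<beta>')"
    using absorb_stabilizer[OF d(2,1) \<rho>(1,2)] by blast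
  show ?thesis
  proof (rule braidedI)
    show "run [] (P @ [Cup i]) = Some w'"
      using run_append_Some[OF d(5)] assms by simp
    have "equiv_at [] (P @ [Cup i]) (partial_closure n k \<beta> @ virtual u @ [Cup i])"
      using equiv_at_append_right[OF d(4), of "[Cup i]"] by simp
    also have "equiv_at [] \<dots> (partial_closure n k \<beta> @ virtual \<rho> @ [Cup m] @ virtual (unsort w'))"
      using equiv_at_append_left[OF \<rho>(3) d(6)] .
    also have "\<dots> = (partial_closure n k \<beta> @ virtual \<rho>) @ [Cup m] @ virtual (unsort w')"
      by simp
    also have "equiv_at [] \<dots> (partial_closure n k \<beta>' @ [Cup m] @ virtual (unsort w'))"
      using equiv_at_append_right[OF \<beta>'(2)] .
    also have "\<dots> = partial_closure n m \<beta>' @ virtual (unsort w')"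
      using partial_closure_Cup[of m n \<beta>'] d(1) k by simp
    finally show "equiv_at [] (P @ [Cup i]) (partial_closure n m \<beta>' @ virtual (unsort w'))" .
  qed (use d \<beta>' v k in auto)
qed

text \<open>The remaining cases are reduced to the ones above by the rotations, at the cost of one
  more strand.\<close>

lemma braided_X_down_up:
  assumes "braided P w n" "Suc i < length w" "w ! i" "\<not> w ! Suc i"
  shows "braided (P @ [X t i]) (swap_at i w) (Suc n)"
proof -
  obtain A a b B where "w = A @ a # b # B" "length A = i"
    using split_nth2[OF assms(2)] by blast
  with assms(3,4) have w: "w = A @ True # False # B" "length A = i"
    by (auto simp: nth_append)
  have cap: "braided (P @ [Cap False i]) (A @ False # True # True # False # B) (Suc n)"
    using braided_Cap[OF assms(1), of i False] w by simp
  have X: "braided ((P @ [Cap False i]) @ [X (\<not> t) (Suc i)]) (A @ False # True # True # False # B) (Suc n)"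
    using braided_X_down_down[OF cap, of "Suc i" "\<not> t"] w by (simp add: nth_append)
  have "braided ((P @ [Cap False i, X (\<not> t) (Suc i)]) @ [Cup (Suc (Suc i))]) (A @ False # True # B) (Suc n)"
    using braided_Cup[OF X, of "Suc (Suc i)" "A @ False # True # B"] w by (simp add: nth_append)
  then show ?thesis
    using braided_replace_last[OF assms(1) X_rotate_right[of i w t]] assms w by (simp add: swap_at_append_Cons)
qed

lemma braided_X_up_down:
  assumes "braided P w n" "Suc i < length w" "\<not> w ! i" "w ! Suc i"
  shows "braided (P @ [X t i]) (swap_at i w) (Suc n)"
proof -
  obtain A a b B where "w = A @ a # b # B" "length A = i"
    using split_nth2[OF assms(2)] by blast
  with assms(3,4) have w: "w = A @ False # True # B" "length A = i"
    by (auto simp: nth_append)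
  have cap: "braided (P @ [Cap True (Suc (Suc i))]) (A @ False # True # True # False # B) (Suc n)"
    using braided_Cap[OF assms(1), of "Suc (Suc i)" True] w by (simp add: take_Cons' drop_Cons')
  have X: "braided ((P @ [Cap True (Suc (Suc i))]) @ [X (\<not> t) (Suc i)]) (A @ False # True # True # False # B) (Suc n)"
    using braided_X_down_down[OF cap, of "Suc i" "\<not> t"] w by (simp add: nth_append)
  have "braided ((P @ [Cap True (Suc (Suc i)), X (\<not> t) (Suc i)]) @ [Cup i]) (A @ True # False # B) (Suc n)"
    using braided_Cup[OF X, of i "A @ True # False # B"] w by (simp add: nth_append)
  then show ?thesis
    using braided_replace_last[OF assms(1) X_rotate_left[of i w t]] assms w by (simp add: swap_at_append_Cons)
qed

lemma braided_X_up_up: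
  assumes "braided P w n" "Suc i < length w" "\<not> w ! i" "\<not> w ! Suc i"
  shows "braided (P @ [X t i]) (swap_at i w) (Suc (Suc n))"
proof -
  obtain A a b B where "w = A @ a # b # B" "length A = i"
    using split_nth2[OF assms(2)] by blast
  with assms(3,4) have w: "w = A @ False # False # B" "length A = i"
    by (auto simp: nth_append)
  have cap: "braided (P @ [Cap False i]) (A @ False # True # False # False # B) (Suc n)"
    using braided_Cap[OF assms(1), of i False] w by simp
  have X: "braided ((P @ [Cap False i]) @ [X (\<not> t) (Suc i)]) (A @ False # False # True # False # B) (Suc (Suc n))"
    using braided_X_down_up[OF cap, of "Suc i" "\<not> t"] w swap_at_append_Cons[of "A @ [False]" "Suc i"]
    by (simp add: nth_append)
  have "braided ((P @ [Cap False i, X (\<not> t) (Suc i)]) @ [Cup (Suc (Suc i))]) (A @ False # False # B) (Suc (Suc n))"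
    using braided_Cup[OF X, of "Suc (Suc i)" "A @ False # False # B"] w by (simp add: nth_append)
  then show ?thesis
    using braided_replace_last[OF assms(1) X_rotate_right[of i w t]] assms w by (simp add: swap_at_append_Cons)
qed

lemma braided_Bar_up:
  assumes "braided P w n" "i < length w" "\<not> w ! i"
  shows "braided (P @ [Bar i]) w (Suc n)"
proof -
  obtain A a B where "w = A @ a # B" "length A = i"
    using split_nth[OF assms(2)] by blast
  with assms(3) have w: "w = A @ False # B" "length A = i"
    by (auto simp: nth_append)
  have cap: "braided (P @ [Cap True (Suc i)]) (A @ False # True # False # B) (Suc n)"
    using braided_Cap[OF assms(1), of "Suc i" True] w by (simp add: take_Cons' drop_Cons')
  have bar: "braided ((P @ [Cap True (Suc i)]) @ [Bar (Suc i)]) (A @ False # True # False # B) (Suc n)"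
    using braided_Bar_down[OF cap, of "Suc i"] w by (simp add: nth_append)
  have "braided ((P @ [Cap True (Suc i), Bar (Suc i)]) @ [Cup i]) (A @ False # B) (Suc n)"
    using braided_Cup[OF bar, of i "A @ False # B"] w by (simp add: nth_append)
  then show ?thesis
    using braided_replace_last[OF assms(1) Bar_rotate[of i w]] assms w by simp
qed

lemma braided_step:
  assumes "braided P w n" "step w g = Some w'"
  shows "\<exists>n'\<ge>n. braided (P @ [g]) w' n'"
proof (cases g)
  case (Cap d i)
  then show ?thesis
    using braided_Cap[OF assms(1), of i d] assms(2) by (intro exI[of _ "Suc n"]) (auto split: if_splits)
next
  case (Cup i)
  then show ?thesis
    using braided_Cup[OF assms(1), of i w'] assms(2) by auto
next
  case (V i)
  then show ?thesis
    using braided_V[OF assms(1)] assms(2) by (auto simp: swap_at_def split: if_splits)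
next
  case (X t i)
  then have i: "Suc i < length w" "w' = swap_at i w"
    using assms(2) by (auto simp: swap_at_def split: if_splits)
  consider "w ! i" "w ! Suc i" | "w ! i" "\<not> w ! Suc i" | "\<not> w ! i" "w ! Suc i" | "\<not> w ! i" "\<not> w ! Suc i"
    by blast
  then show ?thesis
  proof cases
    case 1
    then show ?thesis
      using braided_X_down_down[OF assms(1) i(1) 1, of t] swap_at_same[of i w] X i by auto
  next
    case 2
    then show ?thesis
      using braided_X_down_up[OF assms(1) i(1) 2, of t] X i le_SucI by blast
  next
    case 3
    then show ?thesis
      using braided_X_up_down[OF assms(1) i(1) 3, of t] X i le_SucI by blast
  next
    case 4
    then show ?thesis
      using braided_X_up_up[OF assms(1) i(1) 4, of t] X i by (intro exI[of _ "Suc (Suc n)"]) auto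
  qed
next
  case (Bar i)
  then have i: "i < length w" "w' = w"
    using assms(2) by (auto split: if_splits)
  show ?thesis
    using braided_Bar_down[OF assms(1) i(1)] braided_Bar_up[OF assms(1) i(1)] Bar i le_SucI
    by (cases "w ! i") blast+
qed

lemma braided_prefix: "run [] P = Some w \<Longrightarrow> P \<noteq> [] \<Longrightarrow> \<exists>n\<ge>1. braided P w n"
proof (induction P arbitrary: w rule: rev_induct)
  case (snoc g P)
  obtain w0 where w0: "run [] P = Some w0" "step w0 g = Some w"
    using snoc.prems by (auto simp: run_append split: option.splits)
  show ?case
  proof (cases "P = []")
    case True
    then obtain d where "g = Cap d 0" "w = [d, \<not> d]"
      using w0 by (cases g) (auto split: if_splits)
    then show ?thesis
      using braided_Cap[OF braided_Nil, of 0 d] True by auto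
  next
    case False
    then obtain n where "n \<ge> 1" "braided P w0 n"
      using snoc.IH[OF w0(1)] by blast
    then show ?thesis
      using braided_step[OF _ w0(2)] order_trans by blast
  qed
qed simp

theorem theorem2:
  assumes "twisted_link_diagram D" and "D \<noteq> []"
  shows "\<exists>n \<ge> 1. \<exists>\<beta>. twisted_braid n \<beta> \<and> twisted_equiv (braid_closure n \<beta>) D"
proof -
  have D: "run [] D = Some []"
    using assms(1) unfolding twisted_link_diagram_def .
  obtain n where n: "n \<ge> 1" "braided D [] n"
    using braided_prefix[OF D assms(2)] by blast
  from n(2) obtain k \<beta> u where "k \<le> n" and \<beta>: "twisted_braid n \<beta>" and u: "within (2*k) u"
    and equiv: "equiv_at [] D (partial_closure n k \<beta> @ virtual u)" and "run [] D = Some []"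
    and "run [] (partial_closure n k \<beta>) = Some (nested_row k)" and "apply_swaps u (nested_row k) = []"
    and "length ([] :: bool list) = 2*k"
    by (rule braidedE)
  then have "k = 0" "u = []"
    by (auto simp: within_def)
  then have "equiv_at [] (braid_closure n \<beta>) D"
    using equiv_at_sym[OF equiv] by (simp add: partial_closure_0)
  moreover from this have "run [] (braid_closure n \<beta>) = Some []"
    using equiv_at_run D by simp
  ultimately show ?thesis
    using n \<beta> twisted_equiv_if_equiv_at by blast
qed

end
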